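(* The set consisting of all $\omega_x$ for $x\in\mathrm{Aper}(\sigma)$, together with all $\omega_{x,c}$ for $x\in\bigcup_{q\ge1}\mathrm{Per}_q(\sigma)^\circ$ and $c\in\mathbb{T}$, is a dense subset of the maximal ideal space $\Delta(C(X)'_1)$, and it separates the points of $C(X)'_1$.
   Context: Let $X$ be a non-empty compact Hausdorff space and $\sigma:X\to X$ a homeomorphism. For $n\in\mathbb{Z}$ let $\mathrm{Fix}_n(\sigma)=\{x:\sigma^nx=x\}$; for $p\ge1$ let $\mathrm{Per}_p(\sigma)$ be the set of points of least period $p$; $\mathrm{Aper}(\sigma)$ is the set of points that are not periodic. A superscript $\circ$ denotes interior, $\mathrm{supp}(f)$ the closure of $\{f\ne0\}$. $C(X)$ is the algebra of continuous complex functions with sup norm, $\alpha(f)=f\circ\sigma^{-1}$. $\ell^1(\Sigma)$ is the set of $\ell:\mathbb{Z}\to C(X)$ with $\|\ell\|=\sum_k\|\ell(k)\|_\infty<\infty$, product $(\ell\ell')(n)=\sum_k\ell(k)\alpha^k(\ell'(n-k))$, involution $\ell^*(n)=\overline{\alpha^n(\ell(-n))}$; writing $f_k=\ell(k)$ each element is written $\sum_kf_k\delta^k$. $C(X)'_1$ is the commutant in $\ell^1(\Sigma)$ of $C(X)$ (embedded as elements supported at $0$); it equals $\{\sum_kf_k\delta^k:\mathrm{supp}(f_k)\subset\mathrm{Fix}_k(\sigma)\ \forall k\}$ and is commutative, with maximal ideal space $\Delta(C(X)'_1)$ in the Gelfand topology. For $x\notin\bigcup_{q\ge1}\mathrm{Fix}_q(\sigma)^\circ$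 (in particular for $x\in\mathrm{Aper}(\sigma)$), $\omega_x$ is the character $\sum_kf_k\delta^k\mapsto f_0(x)$; for $x\in\bigcup_{q\ge1}\mathrm{Fix}_q(\sigma)^\circ$ (in particular for $x\in\bigcup_{q\ge1}\mathrm{Per}_q(\sigma)^\circ$) and $c\in\mathbb{T}$, $\omega_{x,c}$ is the character $\sum_kf_k\delta^k\mapsto\sum_jf_{jn}(x)c^j$, with $n$ the minimal $n\ge1$ such that $x\in\mathrm{Fix}_n(\sigma)^\circ$. *)

theory Defs
  imports "HOL-Analysis.Analysis"
begin

text \<open>The compact Hausdorff space X is the universe of a type 'a of class t2_space
  with compact UNIV. Elements of l1(Sigma) are functions int => 'a => complex.\<close>

definition ipow :: "('a \<Rightarrow> 'a) \<Rightarrow> int \<Rightarrow> 'a \<Rightarrow> 'a" where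
  "ipow \<sigma> n = (if 0 \<le> n then \<sigma> ^^ nat n else (inv \<sigma>) ^^ nat (- n))"

definition Fix :: "('a \<Rightarrow> 'a) \<Rightarrow> int \<Rightarrow> 'a set" where
  "Fix \<sigma> n = {x. ipow \<sigma> n x = x}"

definition Per :: "('a \<Rightarrow> 'a) \<Rightarrow> nat \<Rightarrow> 'a set" where
  "Per \<sigma> p = {x. 1 \<le> p \<and> ipow \<sigma> (int p) x = x \<and>
                   (\<forall>m. 1 \<le> m \<and> m < p \<longrightarrow> ipow \<sigma> (int m) x \<noteq> x)}"

definition Aper :: "('a \<Rightarrow> 'a) \<Rightarrow> 'a set" where
  "Aper \<sigma> = {x. \<forall>p::nat. 1 \<le> p \<longrightarrow> ipow \<sigma> (int p) x \<noteq> x}"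

definition supn :: "('a \<Rightarrow> complex) \<Rightarrow> real" where
  "supn f = (SUP x. cmod (f x))"

definition l1 :: "(int \<Rightarrow> 'a::topological_space \<Rightarrow> complex) set" where
  "l1 = {l. (\<forall>k. continuous_on UNIV (l k)) \<and> (\<lambda>k. supn (l k)) summable_on UNIV}"

text \<open>Product in l1(Sigma): (l l')(n) = sum_k l(k) alpha^k(l'(n-k)), alpha^k f = f o sigma^(-k),
  evaluated pointwise.\<close>
definition l1_mult :: "('a \<Rightarrow> 'a) \<Rightarrow> (int \<Rightarrow> 'a \<Rightarrow> complex) \<Rightarrow> (int \<Rightarrow> 'a \<Rightarrow> complex)
    \<Rightarrow> (int \<Rightarrow> 'a \<Rightarrow> complex)" where
  "l1_mult \<sigma> l l' = (\<lambda>n x. \<Sum>\<^sub>\<infinity>k::int. l k x * l' (n - k) (ipow \<sigma> (- k) x))"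

definition emb :: "('a \<Rightarrow> complex) \<Rightarrow> (int \<Rightarrow> 'a \<Rightarrow> complex)" where
  "emb f = (\<lambda>n. if n = 0 then f else (\<lambda>_. 0))"

definition commutant :: "('a::topological_space \<Rightarrow> 'a) \<Rightarrow> (int \<Rightarrow> 'a \<Rightarrow> complex) set" where
  "commutant \<sigma> = {l \<in> l1. \<forall>f. continuous_on UNIV f \<longrightarrow>
                         l1_mult \<sigma> l (emb f) = l1_mult \<sigma> (emb f) l}"

text \<open>Maximal ideal space = characters (nonzero multiplicative linear functionals) of
  C(X)'_1, represented as functions restricted (extensional) to C(X)'_1.\<close>
definition characters :: "('a::topological_space \<Rightarrow> 'a) \<Rightarrow> ((int \<Rightarrow> 'a \<Rightarrow> complex) \<Rightarrow> complex) set" where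
  "characters \<sigma> = {\<phi>. \<phi> \<in> extensional (commutant \<sigma>) \<and>
     (\<forall>a\<in>commutant \<sigma>. \<forall>b\<in>commutant \<sigma>. \<phi> (\<lambda>n x. a n x + b n x) = \<phi> a + \<phi> b) \<and>
     (\<forall>a\<in>commutant \<sigma>. \<forall>c. \<phi> (\<lambda>n x. c * a n x) = c * \<phi> a) \<and>
     (\<forall>a\<in>commutant \<sigma>. \<forall>b\<in>commutant \<sigma>. \<phi> (l1_mult \<sigma> a b) = \<phi> a * \<phi> b) \<and>
     (\<exists>a\<in>commutant \<sigma>. \<phi> a \<noteq> 0)}"

text \<open>Gelfand topology: weak-* topology, i.e. the subspace topology of the product
  topology of pointwise convergence on C(X)'_1.\<close>
definition gelfand_topology :: "('a::topological_space \<Rightarrow> 'a)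
    \<Rightarrow> ((int \<Rightarrow> 'a \<Rightarrow> complex) \<Rightarrow> complex) topology" where
  "gelfand_topology \<sigma> =
     subtopology (product_topology (\<lambda>_. euclidean) (commutant \<sigma>)) (characters \<sigma>)"

definition omega_x :: "('a::topological_space \<Rightarrow> 'a) \<Rightarrow> 'a \<Rightarrow> ((int \<Rightarrow> 'a \<Rightarrow> complex) \<Rightarrow> complex)" where
  "omega_x \<sigma> x = restrict (\<lambda>l. l 0 x) (commutant \<sigma>)"

definition min_int_period :: "('a::topological_space \<Rightarrow> 'a) \<Rightarrow> 'a \<Rightarrow> nat" where
  "min_int_period \<sigma> x = (LEAST n::nat. 1 \<le> n \<and> x \<in> interior (Fix \<sigma> (int n)))"

definition omega_xc :: "('a::topological_space \<Rightarrow> 'a) \<Rightarrow> 'a \<Rightarrow> complex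
    \<Rightarrow> ((int \<Rightarrow> 'a \<Rightarrow> complex) \<Rightarrow> complex)" where
  "omega_xc \<sigma> x c = restrict
     (\<lambda>l. \<Sum>\<^sub>\<infinity>j::int. l (j * int (min_int_period \<sigma> x)) x * c powi j) (commutant \<sigma>)"

end

theory Submission
  imports Defs
begin

text \<open>
  A character \<phi> of C(X)'_1 is bounded by the l^1-norm (Neumann series) and restricts on C(X) to
  evaluation at a point x0. A monomial f \<delta>^k with f(x0) = 0 factors as sqrt|f| * (f / sqrt|f|) \<delta>^k,
  so \<phi> kills it. Hence \<phi>(f \<delta>^k) = f(x0) if x0 lies in the interior of no Fix_n, and
  \<phi>(f \<delta>^(jn)) = f(x0) c^j for some |c| = 1 if n is least with x0 in the interior of Fix_n.
  By Baire, Aper \<union> \<Union>_q int Per_q is dense, and inside int Fix_n the points of the sets int Per_p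
  with p | n are dense; at such a point y near x0 the character \<omega>_y, resp. \<omega>_(y,d) with
  d^(n/p) = c, agrees with \<phi> on monomials up to |f(y) - f(x0)|, and truncating the expansions
  \<Sum>_k a_k \<delta>^k gives weak-* density. For separation, a nonzero coefficient a_k is nonzero at such a
  point y; there either \<omega>_y sees it, or the absolutely convergent Fourier series
  c \<mapsto> \<Sum>_j a_(jp)(y) c^j does not vanish identically on the circle.
\<close>

section \<open>Absolutely summable families\<close>

lemma infsum_eq_single:
  fixes g :: "'b \<Rightarrow> 'c::{comm_monoid_add,t2_space}"
  assumes "\<And>k. k \<noteq> m \<Longrightarrow> g k = 0"
  shows "infsum g UNIV = g m"
proof -
  have "infsum g UNIV = infsum g {m}"
    by (rule infsum_cong_neutral) (use assms in auto)
  then show ?thesis by simp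
qed

lemma infsum_Compl:
  fixes f :: "'b \<Rightarrow> 'c::banach"
  assumes "f summable_on UNIV" "finite F"
  shows "infsum f (- F) = infsum f UNIV - sum f F"
proof -
  have "infsum f UNIV = infsum f (F \<union> - F)" by simp
  also have "\<dots> = infsum f F + infsum f (- F)"
    by (rule infsum_Un_disjoint) (auto intro: summable_on_subset_banach[OF assms(1)])
  finally show ?thesis using assms(2) by simp
qed

lemma infsum_tail_small:
  fixes M :: "'b \<Rightarrow> real"
  assumes "M summable_on UNIV" "e > 0"
  obtains F where "finite F" "\<And>G. finite G \<Longrightarrow> F \<subseteq> G \<Longrightarrow> \<bar>infsum M (- G)\<bar> < e"
proof -
  have "\<forall>\<^sub>F F in finite_subsets_at_top UNIV. dist (sum M F) (infsum M UNIV) < e"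
    using infsum_tendsto[OF assms(1)] assms(2) tendsto_iff by blast
  then obtain F where "finite F" "\<And>G. finite G \<Longrightarrow> F \<subseteq> G \<Longrightarrow> dist (sum M G) (infsum M UNIV) < e"
    by (auto simp: eventually_finite_subsets_at_top)
  then show ?thesis
    using that infsum_Compl[OF assms(1)] by (auto simp: dist_real_def abs_minus_commute)
qed

lemma summable_on_norm_dominated:
  fixes f :: "'b \<Rightarrow> 'c::banach"
  assumes "M summable_on A" "\<And>k. k \<in> A \<Longrightarrow> norm (f k) \<le> M k"
  shows "f summable_on A"
  by (rule abs_summable_summable, rule summable_on_comparison_test[OF assms(1)]) (use assms in auto)

lemma norm_infsum_dominated:
  fixes f :: "'b \<Rightarrow> 'c::banach"
  assumes "M summable_on A" "\<And>k. k \<in> A \<Longrightarrow> norm (f k) \<le> M k"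
  shows "norm (infsum f A) \<le> infsum M A"
  by (rule norm_infsum_le[OF has_sum_infsum has_sum_infsum[OF assms(1)]])
    (use assms summable_on_norm_dominated[OF assms] in auto)

lemma infsum_diff:
  fixes f g :: "'b \<Rightarrow> 'c::{topological_ab_group_add,t2_space}"
  assumes "f summable_on A" "g summable_on A"
  shows "infsum (\<lambda>x. f x - g x) A = infsum f A - infsum g A"
  using infsum_add[OF assms(1) summable_on_uminus[THEN iffD2, OF assms(2)]] infsum_uminus[of g A]
  by simp

lemma infsum_sum:
  fixes f :: "'r \<Rightarrow> 'b \<Rightarrow> 'c::{topological_comm_monoid_add,t2_space}"
  assumes "finite R" "\<And>r. r \<in> R \<Longrightarrow> f r summable_on A"
  shows "infsum (\<lambda>j. \<Sum>r\<in>R. f r j) A = (\<Sum>r\<in>R. infsum (f r) A)"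
proof -
  have "(\<lambda>j. \<Sum>r\<in>R. f r j) summable_on A \<and> infsum (\<lambda>j. \<Sum>r\<in>R. f r j) A = (\<Sum>r\<in>R. infsum (f r) A)"
    using assms
  proof (induction R rule: finite_induct)
    case (insert r R)
    then show ?case by (simp add: summable_on_add infsum_add)
  qed simp
  then show ?thesis by blast
qed

lemma infsum_shift_Suc:
  fixes f :: "nat \<Rightarrow> 'c::banach"
  assumes "f summable_on UNIV"
  shows "(\<Sum>\<^sub>\<infinity>m. f (Suc m)) = (\<Sum>\<^sub>\<infinity>m. f m) - f 0"
proof -
  have U: "UNIV = insert 0 (range Suc)" by (auto simp: image_iff) (metis not0_implies_Suc)
  have "(\<Sum>\<^sub>\<infinity>m. f m) = f 0 + infsum f (range Suc)"
    by (subst U, rule infsum_insert[OF summable_on_subset_banach[OF assms]]) auto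
  also have "infsum f (range Suc) = (\<Sum>\<^sub>\<infinity>m. f (Suc m))"
    by (subst infsum_reindex) (auto simp: o_def)
  finally show ?thesis by simp
qed

lemma summable_on_product_nonneg:
  fixes u :: "'i \<Rightarrow> real" and v :: "'j \<Rightarrow> real"
  assumes "u summable_on UNIV" "v summable_on UNIV" "\<And>i. 0 \<le> u i" "\<And>j. 0 \<le> v j"
  shows "(\<lambda>(i,j). u i * v j) summable_on UNIV"
proof -
  have "(\<lambda>(i,j). u i * v j) summable_on Sigma UNIV (\<lambda>_. UNIV)"
  proof (rule summable_on_SigmaI[where g="\<lambda>i. u i * infsum v UNIV"])
    show "((\<lambda>j. case (i, j) of (i, j) \<Rightarrow> u i * v j) has_sum u i * infsum v UNIV) UNIV" for i
      using has_sum_cmult_right[OF has_sum_infsum[OF assms(2)]] by simp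
  qed (use assms summable_on_cmult_left[OF assms(1)] in auto)
  then show ?thesis by simp
qed

lemma infsum_convolution:
  fixes f g :: "int \<Rightarrow> 'c::{real_normed_field,banach}"
  assumes sf: "(\<lambda>k. norm (f k)) summable_on UNIV" and sg: "(\<lambda>k. norm (g k)) summable_on UNIV"
  shows "(\<lambda>(n,k). f k * g (n - k)) summable_on UNIV"
    and "(\<lambda>n. \<Sum>\<^sub>\<infinity>k. f k * g (n - k)) summable_on UNIV"
    and "(\<Sum>\<^sub>\<infinity>n. \<Sum>\<^sub>\<infinity>k. f k * g (n - k)) = (\<Sum>\<^sub>\<infinity>k. f k) * (\<Sum>\<^sub>\<infinity>m. g m)"
proof -
  have "(\<lambda>(k,m). norm (f k) * norm (g m)) summable_on UNIV"
    by (rule summable_on_product_nonneg[OF sf sg]) auto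
  then have "(\<lambda>p. norm (f (fst p) * g (snd p))) summable_on UNIV"
    by (simp add: norm_mult case_prod_unfold)
  then have P: "(\<lambda>p. f (fst p) * g (snd p)) summable_on UNIV" by (rule abs_summable_summable)
  have bij: "bij_betw (\<lambda>(n,k). (k, n - k)) (UNIV::(int \<times> int) set) UNIV"
    by (rule bij_betw_byWitness[where f'="\<lambda>(k,m). (k + m, k)"])
      (simp_all add: case_prod_unfold image_subset_iff)
  have "(\<lambda>p. (\<lambda>p. f (fst p) * g (snd p)) ((\<lambda>(n,k). (k, n - k)) p)) summable_on UNIV"
    by (subst summable_on_reindex_bij_betw[OF bij]) (rule P)
  then show S: "(\<lambda>(n,k). f k * g (n - k)) summable_on UNIV" by (simp add: case_prod_unfold)
  then have S': "(\<lambda>(n,k). f k * g (n - k)) summable_on Sigma UNIV (\<lambda>_. UNIV)" by simp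
  show "(\<lambda>n. \<Sum>\<^sub>\<infinity>k. f k * g (n - k)) summable_on UNIV"
    using summable_on_Sigma_banach[OF S'] by simp
  have P': "(\<lambda>(k,m). f k * g m) summable_on Sigma UNIV (\<lambda>_. UNIV)"
    using P by (simp add: case_prod_unfold)
  have "(\<Sum>\<^sub>\<infinity>n. \<Sum>\<^sub>\<infinity>k. f k * g (n - k)) = infsum (\<lambda>(n,k). f k * g (n - k)) UNIV"
    using infsum_Sigma'_banach[OF S'] by simp
  also have "\<dots> = infsum (\<lambda>p. (\<lambda>p. f (fst p) * g (snd p)) ((\<lambda>(n,k). (k, n - k)) p)) UNIV"
    by (simp add: case_prod_unfold)
  also have "\<dots> = infsum (\<lambda>p. f (fst p) * g (snd p)) UNIV"
    by (rule infsum_reindex_bij_betw[OF bij])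
  also have "\<dots> = (\<Sum>\<^sub>\<infinity>k. \<Sum>\<^sub>\<infinity>m. f k * g m)"
    using infsum_Sigma'_banach[OF P'] by (simp add: case_prod_unfold)
  also have "\<dots> = (\<Sum>\<^sub>\<infinity>k. f k * (\<Sum>\<^sub>\<infinity>m. g m))"
    by (rule infsum_cong) (rule infsum_cmult_right, rule abs_summable_summable[OF sg])
  also have "\<dots> = (\<Sum>\<^sub>\<infinity>k. f k) * (\<Sum>\<^sub>\<infinity>m. g m)"
    by (rule infsum_cmult_left) (rule abs_summable_summable[OF sf])
  finally show "(\<Sum>\<^sub>\<infinity>n. \<Sum>\<^sub>\<infinity>k. f k * g (n - k)) = (\<Sum>\<^sub>\<infinity>k. f k) * (\<Sum>\<^sub>\<infinity>m. g m)" .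
qed

lemma summable_on_convolution_term:
  fixes f g :: "int \<Rightarrow> complex"
  assumes "(\<lambda>k. norm (f k)) summable_on UNIV" "(\<lambda>k. norm (g k)) summable_on UNIV"
  shows "(\<lambda>k. f k * g (n - k)) summable_on UNIV"
  using summable_on_SigmaD1[where f="\<lambda>n k. f k * g (n - k)", of UNIV "\<lambda>_. UNIV" n]
    infsum_convolution(1)[OF assms] by simp

lemma continuous_on_uniform_approx:
  fixes f :: "'a::topological_space \<Rightarrow> 'c::metric_space"
  assumes "\<And>e. e > 0 \<Longrightarrow> \<exists>g. continuous_on UNIV g \<and> (\<forall>x. dist (g x) (f x) < e)"
  shows "continuous_on UNIV f"
proof -
  obtain g where g: "\<And>n. continuous_on UNIV (g n) \<and> (\<forall>x. dist (g n x) (f x) < 1 / Suc n)"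
    using assms[of "1 / Suc _"] by (metis of_nat_0_less_iff zero_less_Suc zero_less_divide_1_iff)
  show ?thesis
  proof (rule uniform_limit_theorem[where f=g])
    show "uniform_limit UNIV g f sequentially"
    proof (rule uniform_limitI)
      fix e :: real assume "e > 0"
      then obtain N :: nat where N: "1 / Suc N < e" by (metis nat_approx_posE)
      have "dist (g n x) (f x) < e" if "N \<le> n" for n x
      proof -
        have "1 / real (Suc n) \<le> 1 / Suc N" using that by (simp add: frac_le)
        moreover have "dist (g n x) (f x) < 1 / Suc n" using g by blast
        ultimately show ?thesis using N by linarith
      qed
      then show "\<forall>\<^sub>F n in sequentially. \<forall>x\<in>UNIV. dist (g n x) (f x) < e"
        by (auto simp: eventually_sequentially)
    qed
  qed (use g in auto)
qed

lemma continuous_on_infsum_dominated: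
  fixes t :: "'b \<Rightarrow> 'a::topological_space \<Rightarrow> complex"
  assumes "\<And>k. continuous_on UNIV (t k)" "M summable_on UNIV" "\<And>k x. norm (t k x) \<le> M k"
  shows "continuous_on UNIV (\<lambda>x. \<Sum>\<^sub>\<infinity>k. t k x)"
proof (rule continuous_on_uniform_approx)
  fix e :: real assume "e > 0"
  then obtain F where F: "finite F" "\<bar>infsum M (- F)\<bar> < e"
    using infsum_tail_small[OF assms(2)] by blast
  have "dist (\<Sum>k\<in>F. t k x) (\<Sum>\<^sub>\<infinity>k. t k x) < e" for x
  proof -
    have "dist (\<Sum>k\<in>F. t k x) (\<Sum>\<^sub>\<infinity>k. t k x) = norm (infsum (\<lambda>k. t k x) (- F))"
      using infsum_Compl[OF summable_on_norm_dominated[OF assms(2,3)] F(1)]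
      by (simp add: dist_norm norm_minus_commute)
    also have "\<dots> \<le> infsum M (- F)"
      by (rule norm_infsum_dominated[OF summable_on_subset_banach[OF assms(2)]]) (use assms in auto)
    finally show ?thesis using F(2) by linarith
  qed
  moreover have "continuous_on UNIV (\<lambda>x. \<Sum>k\<in>F. t k x)" by (intro continuous_intros assms)
  ultimately show "\<exists>g. continuous_on UNIV g \<and> (\<forall>x. dist (g x) (\<Sum>\<^sub>\<infinity>k. t k x) < e)" by blast
qed

lemma continuous_on_funpow:
  fixes f :: "'b::topological_space \<Rightarrow> 'b"
  assumes "continuous_on UNIV f"
  shows "continuous_on UNIV (f ^^ n)"
proof (induction n)
  case (Suc n)
  then have "continuous_on UNIV (f \<circ> (f ^^ n))"
    by (intro continuous_on_compose) (auto intro: continuous_on_subset[OF assms])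
  then show ?case by simp
qed (simp add: id_def continuous_on_id)

lemma open_nonzero_set:
  fixes f :: "'b::topological_space \<Rightarrow> complex"
  assumes "continuous_on UNIV f"
  shows "open {x. f x \<noteq> 0}"
proof -
  have "open (f -` (- {0}))" by (rule open_vimage) (auto intro: assms)
  moreover have "f -` (- {0}) = {x. f x \<noteq> 0}" by auto
  ultimately show ?thesis by simp
qed

lemma finite_closed_cover_contains_open:
  fixes C :: "'i \<Rightarrow> 'b::topological_space set"
  assumes "finite M" "\<And>m. m \<in> M \<Longrightarrow> closed (C m)"
    and "open W" "W \<noteq> {}" "W \<subseteq> (\<Union>m\<in>M. C m)"
  shows "\<exists>m\<in>M. \<exists>W'. open W' \<and> W' \<noteq> {} \<and> W' \<subseteq> W \<and> W' \<subseteq> C m"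
  using assms
proof (induction M arbitrary: W rule: finite_induct)
  case (insert m M)
  show ?case
  proof (cases "W \<subseteq> C m")
    case False
    then have "\<exists>m'\<in>M. \<exists>W'. open W' \<and> W' \<noteq> {} \<and> W' \<subseteq> W - C m \<and> W' \<subseteq> C m'"
      using insert by (intro insert.IH) (auto intro!: open_Diff)
    then show ?thesis by blast
  qed (use insert.prems in blast)
qed simp

definition div_sqrt_norm :: "complex \<Rightarrow> complex" where
  "div_sqrt_norm z = z / of_real (sqrt (cmod z))"

lemma sqrt_norm_mult_div_sqrt_norm: "of_real (sqrt (cmod z)) * div_sqrt_norm z = z"
  by (cases "z = 0") (auto simp: div_sqrt_norm_def)

lemma div_sqrt_norm_eq_0_iff: "div_sqrt_norm z = 0 \<longleftrightarrow> z = 0"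
  by (simp add: div_sqrt_norm_def)

lemma continuous_on_div_sqrt_norm: "continuous_on UNIV div_sqrt_norm"
proof (rule continuous_at_imp_continuous_on, intro ballI)
  fix z :: complex
  show "isCont div_sqrt_norm z"
  proof (cases "z = 0")
    case True
    have "cmod (div_sqrt_norm w) = sqrt (cmod w)" for w
      by (cases "w = 0") (simp_all add: div_sqrt_norm_def norm_divide real_div_sqrt)
    moreover have "((\<lambda>w. sqrt (cmod w)) \<longlongrightarrow> sqrt (cmod 0)) (at (0::complex))"
      by (intro tendsto_intros)
    ultimately have "((\<lambda>w. cmod (div_sqrt_norm w)) \<longlongrightarrow> 0) (at 0)"
      by simp
    then have "(div_sqrt_norm \<longlongrightarrow> 0) (at 0)"
      by (rule tendsto_norm_zero_cancel)
    then show ?thesis using True by (simp add: isCont_def div_sqrt_norm_def)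
  qed (unfold div_sqrt_norm_def, intro continuous_intros, auto)
qed

lemma in_product_topology_closure_of_approx:
  fixes S :: "('i \<Rightarrow> 'b::metric_space) set"
  assumes "S \<subseteq> extensional I" "\<phi> \<in> extensional I"
    and approx: "\<And>J e. finite J \<Longrightarrow> J \<subseteq> I \<Longrightarrow> e > 0 \<Longrightarrow> \<exists>\<omega>\<in>S. \<forall>i\<in>J. dist (\<omega> i) (\<phi> i) < e"
  shows "\<phi> \<in> product_topology (\<lambda>_. euclidean) I closure_of S"
  unfolding in_closure_of
proof (intro conjI allI impI)
  show "\<phi> \<in> topspace (product_topology (\<lambda>_. euclidean) I)" using assms(2) by (simp add: PiE_def)
  fix T assume "\<phi> \<in> T \<and> openin (product_topology (\<lambda>_. euclidean) I) T"
  then obtain U where U: "finite {i \<in> I. U i \<noteq> UNIV}" "\<And>i. i \<in> I \<Longrightarrow> open (U i)"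
    "\<phi> \<in> Pi\<^sub>E I U" "Pi\<^sub>E I U \<subseteq> T"
    unfolding openin_product_topology_alt by auto
  define J where "J = {i \<in> I. U i \<noteq> UNIV}"
  have "\<exists>e>0. ball (\<phi> i) e \<subseteq> U i" if "i \<in> J" for i
    using U(2,3) that open_contains_ball by (auto simp: J_def PiE_def)
  then obtain E where E: "\<And>i. i \<in> J \<Longrightarrow> E i > 0 \<and> ball (\<phi> i) (E i) \<subseteq> U i" by metis
  define e where "e = (if J = {} then 1 else Min (E ` J))"
  have J: "finite J" "J \<subseteq> I" using U(1) by (auto simp: J_def)
  then have "e > 0" "\<And>i. i \<in> J \<Longrightarrow> e \<le> E i" unfolding e_def using E by auto
  then obtain \<omega> where \<omega>: "\<omega> \<in> S" "\<And>i. i \<in> J \<Longrightarrow> dist (\<omega> i) (\<phi> i) < e"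
    using approx[OF J] by blast
  have "\<omega> i \<in> U i" if "i \<in> I" for i
  proof (cases "i \<in> J")
    case True
    then show ?thesis using \<omega>(2) \<open>\<And>i. i \<in> J \<Longrightarrow> e \<le> E i\<close> E by (force simp: dist_commute)
  qed (use that in \<open>simp add: J_def\<close>)
  then have "\<omega> \<in> Pi\<^sub>E I U" using \<omega>(1) assms(1) by (auto simp: PiE_def)
  then show "\<exists>y. y \<in> S \<and> y \<in> T" using U(4) \<omega>(1) by blast
qed

section \<open>Fourier coefficients on the unit circle\<close>

lemma unit_circle_root:
  assumes "cmod c = 1" "0 < m"
  obtains d where "cmod d = 1" "d ^ m = c"
proof -
  have "cis (Arg c / m) ^ m = cis (Arg c)" using assms(2) by (simp add: Complex.DeMoivre)
  also have "\<dots> = c" using assms(1) by (subst cis_Arg) (auto simp: sgn_eq)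
  finally show ?thesis using that[of "cis (Arg c / m)"] by simp
qed

lemma sum_roots_of_unity_powi:
  assumes N: "0 < N"
  shows "(\<Sum>r<N. cis (2 * pi * real r / real N) powi t) = (if int N dvd t then of_nat N else 0)"
proof -
  define w where "w = cis (2 * pi * real_of_int t / real N)"
  have pw: "cis (2 * pi * real r / real N) powi t = w ^ r" for r
    unfolding w_def cis_power_int Complex.DeMoivre by (simp add: field_simps)
  have wN: "w ^ N = 1"
  proof -
    have "w ^ N = cis (2 * pi * real_of_int t)" unfolding w_def Complex.DeMoivre using N by (simp add: field_simps)
    also have "\<dots> = 1" by (rule cis_multiple_2pi) simp
    finally show ?thesis .
  qed
  show ?thesis
  proof (cases "int N dvd t")
    case True
    then obtain q where t: "t = int N * q" by (auto simp: dvd_def)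
    have "w = cis (2 * pi * real_of_int q)" unfolding w_def t using N by (simp add: field_simps)
    also have "\<dots> = 1" by (rule cis_multiple_2pi) simp
    finally show ?thesis using True by (simp add: pw)
  next
    case False
    have "w \<noteq> 1"
    proof
      assume "w = 1"
      then have "exp (\<i> * complex_of_real (2 * pi * real_of_int t / real N)) = 1"
        by (simp add: w_def cis_conv_exp)
      then obtain n :: int where "2 * pi * real_of_int t / real N = of_int (2 * n) * pi"
        by (auto simp: exp_eq_1)
      then have "real_of_int t = real_of_int (n * int N)" using N by (simp add: field_simps)
      then have "t = n * int N" by linarith
      with False show False by simp
    qed
    then have "(\<Sum>r<N. w ^ r) = (w ^ N - 1) / (w - 1)" by (rule geometric_sum)
    then show ?thesis using False wN by (simp add: pw)
  qed
qed

text \<open>Averaging c^-m * (\<Sum>_j b_j c^j) over the N-th roots of unity c filters out the residue class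
  of m modulo N.\<close>

lemma infsum_residue_class_eq_0:
  fixes b :: "int \<Rightarrow> complex"
  assumes s: "(\<lambda>j. norm (b j)) summable_on UNIV"
    and z: "\<And>c. cmod c = 1 \<Longrightarrow> (\<Sum>\<^sub>\<infinity>j. b j * c powi j) = 0"
    and N: "0 < N"
  shows "infsum b {j. int N dvd (j - m)} = 0"
proof -
  define c where "c r = cis (2 * pi * real r / real N)" for r :: nat
  have c1: "cmod (c r) = 1" for r by (simp add: c_def)
  have sc: "(\<lambda>j. b j * c r powi j) summable_on UNIV" for r
    by (rule summable_on_norm_dominated[OF s]) (simp add: norm_mult norm_power_int c1)
  have "0 = (\<Sum>r<N. c r powi (- m) * (\<Sum>\<^sub>\<infinity>j. b j * c r powi j))" using z[OF c1] by simp
  also have "\<dots> = (\<Sum>r<N. \<Sum>\<^sub>\<infinity>j. c r powi (- m) * (b j * c r powi j))"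
    by (intro sum.cong refl infsum_cmult_right[symmetric] sc)
  also have "\<dots> = (\<Sum>\<^sub>\<infinity>j. \<Sum>r<N. c r powi (- m) * (b j * c r powi j))"
    by (rule infsum_sum[symmetric]) (auto intro: summable_on_cmult_right sc)
  also have "\<dots> = (\<Sum>\<^sub>\<infinity>j. b j * (\<Sum>r<N. c r powi (j - m)))"
  proof (rule infsum_cong)
    fix j
    have "c r powi (- m) * (b j * c r powi j) = b j * c r powi (j - m)" for r
    proof -
      have "c r \<noteq> 0" using c1[of r] by auto
      then have "c r powi (- m + j) = c r powi (- m) * c r powi j" using power_int_add by blast
      then show ?thesis by (simp add: ac_simps)
    qed
    then have "(\<Sum>r<N. c r powi (- m) * (b j * c r powi j)) = (\<Sum>r<N. b j * c r powi (j - m))"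
      by (intro sum.cong) auto
    then show "(\<Sum>r<N. c r powi (- m) * (b j * c r powi j)) = b j * (\<Sum>r<N. c r powi (j - m))"
      by (simp add: sum_distrib_left)
  qed
  also have "\<dots> = (\<Sum>\<^sub>\<infinity>j. of_nat N * (if int N dvd (j - m) then b j else 0))"
    by (rule infsum_cong) (simp add: c_def sum_roots_of_unity_powi[OF N])
  also have "\<dots> = of_nat N * (\<Sum>\<^sub>\<infinity>j. if int N dvd (j - m) then b j else 0)"
    by (rule infsum_cmult_right, rule summable_on_norm_dominated[OF s]) simp
  also have "(\<Sum>\<^sub>\<infinity>j. if int N dvd (j - m) then b j else 0) = infsum b {j. int N dvd (j - m)}"
    by (rule infsum_cong_neutral) auto
  finally show ?thesis using N by simp
qed

text \<open>Take N larger than every |j - m| with j in a finite set carrying all but \<epsilon> of \<Sum>_j |b_j|.\<close>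

lemma fourier_coefficient_eq_0:
  fixes b :: "int \<Rightarrow> complex"
  assumes s: "(\<lambda>j. norm (b j)) summable_on UNIV"
    and z: "\<And>c. cmod c = 1 \<Longrightarrow> (\<Sum>\<^sub>\<infinity>j. b j * c powi j) = 0"
  shows "b m = 0"
proof -
  have bs: "b summable_on A" for A
    by (rule summable_on_subset_banach[OF abs_summable_summable[OF s]]) simp
  have bsn: "(\<lambda>j. norm (b j)) summable_on A" for A by (rule summable_on_subset_banach[OF s]) simp
  have "cmod (b m) < e" if e: "e > 0" for e
  proof -
    obtain F where F: "finite F" "\<And>G. finite G \<Longrightarrow> F \<subseteq> G \<Longrightarrow> \<bar>infsum (\<lambda>j. norm (b j)) (- G)\<bar> < e"
      using infsum_tail_small[OF s e] by blast
    define N where "N = Suc (nat (\<Sum>j\<in>F. \<bar>j - m\<bar>))"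
    define A where "A = {j. int N dvd (j - m)}"
    have far: "j \<notin> F" if "j \<in> A" "j \<noteq> m" for j
    proof
      assume "j \<in> F"
      then have "\<bar>j - m\<bar> < int N"
        using member_le_sum[of j F "\<lambda>j. \<bar>j - m\<bar>"] F(1) by (simp add: N_def)
      moreover have "int N \<le> \<bar>j - m\<bar>" using that by (simp add: A_def zdvd_imp_le dvd_abs_iff)
      ultimately show False by simp
    qed
    have "0 = infsum b A"
      using infsum_residue_class_eq_0[OF s z, of N m] by (simp add: A_def N_def del: of_nat_Suc)
    also have "\<dots> = b m + infsum b (A - {m})"
      using infsum_insert[OF bs, of m "A - {m}"] by (simp add: A_def insert_absorb)
    finally have "b m = - infsum b (A - {m})" by (simp add: eq_neg_iff_add_eq_0)
    then have "cmod (b m) \<le> infsum (\<lambda>j. norm (b j)) (A - {m})"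
      using norm_infsum_bound[OF bsn] by simp
    also have "\<dots> \<le> infsum (\<lambda>j. norm (b j)) (- F)"
      by (rule infsum_mono_neutral[OF bsn bsn]) (use far in auto)
    also have "\<dots> < e" using F(2)[OF F(1)] by simp
    finally show ?thesis .
  qed
  then show ?thesis by (metis norm_le_zero_iff not_less order_refl zero_less_norm_iff)
qed

section \<open>Elements of \<open>\<ell>\<^sup>1(\<Sigma>)\<close>\<close>

definition monomial :: "int \<Rightarrow> ('a \<Rightarrow> complex) \<Rightarrow> int \<Rightarrow> 'a \<Rightarrow> complex" where
  "monomial k f = (\<lambda>n. if n = k then f else (\<lambda>_. 0))"

lemma emb_eq_monomial: "emb f = monomial 0 f"
  by (simp add: emb_def monomial_def)

definition l1_one :: "int \<Rightarrow> 'a \<Rightarrow> complex" where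
  "l1_one = emb (\<lambda>_. 1)"

definition l1_norm :: "(int \<Rightarrow> 'a \<Rightarrow> complex) \<Rightarrow> real" where
  "l1_norm a = (\<Sum>\<^sub>\<infinity>k. supn (a k))"

lemma supn_least: "(\<And>x. cmod (f x) \<le> B) \<Longrightarrow> supn f \<le> B"
  unfolding supn_def by (rule cSUP_least) auto

lemma supn_const [simp]: "supn (\<lambda>_. c) = cmod c"
  by (simp add: supn_def)

lemma ipow_0 [simp]: "ipow \<sigma> 0 = id"
  by (simp add: ipow_def)

lemma Fix_0 [simp]: "Fix \<sigma> 0 = UNIV"
  by (simp add: Fix_def)

lemma l1_mult_emb_right: "l1_mult \<sigma> a (emb f) n x = a n x * f (ipow \<sigma> (- n) x)"
  unfolding l1_mult_def by (subst infsum_eq_single[where m=n]) (auto simp: emb_def)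

lemma l1_mult_emb_left: "l1_mult \<sigma> (emb f) a n x = f x * a n x"
  unfolding l1_mult_def by (subst infsum_eq_single[where m=0]) (auto simp: emb_def)

lemma l1_mult_one_left [simp]: "l1_mult \<sigma> l1_one a = a"
  by (simp add: l1_one_def l1_mult_emb_left fun_eq_iff)

lemma l1_mult_emb_emb: "l1_mult \<sigma> (emb g) (emb h) = emb (\<lambda>y. g y * h y)"
  unfolding fun_eq_iff l1_mult_emb_left by (simp add: emb_def)

section \<open>The homeomorphism and its fixed-point sets\<close>

locale compact_homeo =
  fixes \<sigma> :: "'a::t2_space \<Rightarrow> 'a"
  assumes compact_UNIV: "compact (UNIV :: 'a set)"
    and bij_sigma: "bij \<sigma>"
    and continuous_sigma: "continuous_on UNIV \<sigma>"
    and continuous_inv_sigma: "continuous_on UNIV (inv \<sigma>)"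
begin

lemma sigma_inv [simp]: "\<sigma> (inv \<sigma> x) = x" "inv \<sigma> (\<sigma> x) = x"
  using bij_sigma by (simp_all add: bij_def surj_f_inv_f)

lemma ipow_plus_1: "ipow \<sigma> (n + 1) = \<sigma> \<circ> ipow \<sigma> n"
proof (cases "0 \<le> n")
  case True
  then have "nat (n + 1) = Suc (nat n)" by simp
  with True show ?thesis by (simp add: ipow_def)
next
  case False
  show ?thesis
  proof (cases "n = -1")
    case False': False
    with False have "nat (- n) = Suc (nat (- (n + 1)))" by simp
    with False False' show ?thesis by (auto simp: ipow_def fun_eq_iff)
  qed (auto simp: ipow_def fun_eq_iff)
qed

lemma ipow_minus_1: "ipow \<sigma> (n - 1) = inv \<sigma> \<circ> ipow \<sigma> n"
  using ipow_plus_1[of "n - 1"] by (auto simp: fun_eq_iff)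

lemma ipow_add: "ipow \<sigma> (m + n) x = ipow \<sigma> m (ipow \<sigma> n x)"
proof (induction m rule: int_induct[where k=0])
  case (step1 i)
  have "ipow \<sigma> (i + 1 + n) x = ipow \<sigma> ((i + n) + 1) x" by (simp add: ac_simps)
  then show ?case using step1 by (simp add: ipow_plus_1)
next
  case (step2 i)
  have "ipow \<sigma> (i - 1 + n) x = ipow \<sigma> ((i + n) - 1) x" by (simp only: diff_add_eq)
  then show ?case using step2 by (simp add: ipow_minus_1)
qed simp

lemma ipow_uminus_cancel [simp]: "ipow \<sigma> (- k) (ipow \<sigma> k x) = x" "ipow \<sigma> k (ipow \<sigma> (- k) x) = x"
  using ipow_add[of "- k" k x] ipow_add[of k "- k" x] by auto

lemma continuous_on_ipow: "continuous_on UNIV (ipow \<sigma> n)"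
  by (simp add: ipow_def continuous_on_funpow continuous_sigma continuous_inv_sigma)

lemma continuous_on_compose_ipow:
  assumes "continuous_on UNIV f"
  shows "continuous_on UNIV (\<lambda>x. f (ipow \<sigma> n x))"
proof -
  have "continuous_on UNIV (f \<circ> ipow \<sigma> n)"
    by (rule continuous_on_compose[OF continuous_on_ipow]) (rule continuous_on_subset[OF assms], simp)
  then show ?thesis by (simp add: o_def)
qed

lemma closed_Fix: "closed (Fix \<sigma> k)"
  unfolding Fix_def by (rule closed_Collect_eq) (auto intro: continuous_on_ipow continuous_on_id)

lemma Fix_uminus: "Fix \<sigma> (- k) = Fix \<sigma> k"
  unfolding Fix_def by (metis ipow_uminus_cancel)

lemma Fix_abs: "Fix \<sigma> (int (nat \<bar>k\<bar>)) = Fix \<sigma> k"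
  using Fix_uminus[of k] by (cases "k \<ge> 0") auto

lemma Fix_add: "x \<in> Fix \<sigma> a \<Longrightarrow> x \<in> Fix \<sigma> b \<Longrightarrow> x \<in> Fix \<sigma> (a + b)"
  by (simp add: Fix_def ipow_add)

lemma Fix_mult: "x \<in> Fix \<sigma> a \<Longrightarrow> x \<in> Fix \<sigma> (j * a)"
proof (induction j rule: int_induct[where k=0])
  case (step1 i) then show ?case using Fix_add[of x "i * a" a] by (simp add: algebra_simps)
next
  case (step2 i) then show ?case using Fix_add[of x "i * a" "- a"] Fix_uminus[of a] by (simp add: algebra_simps)
qed simp

lemma Fix_gcd: "x \<in> Fix \<sigma> a \<Longrightarrow> x \<in> Fix \<sigma> b \<Longrightarrow> x \<in> Fix \<sigma> (gcd a b)"
  by (metis Fix_add Fix_mult bezout_int)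

lemma Per_Fix_imp_dvd:
  assumes "x \<in> Per \<sigma> q" "x \<in> Fix \<sigma> k"
  shows "int q dvd k"
proof (rule ccontr)
  assume nd: "\<not> int q dvd k"
  have q1: "1 \<le> q" and xq: "x \<in> Fix \<sigma> (int q)" using assms by (simp_all add: Per_def Fix_def)
  have "x \<in> Fix \<sigma> (k + (- (k div int q)) * int q)" by (rule Fix_add[OF assms(2) Fix_mult[OF xq]])
  moreover have "k + (- (k div int q)) * int q = k mod int q"
    by (simp add: algebra_simps minus_div_mult_eq_mod)
  ultimately have x: "x \<in> Fix \<sigma> (int (nat (k mod int q)))" using q1 by simp
  have "k mod int q \<noteq> 0" using nd by (simp add: dvd_eq_mod_eq_0)
  moreover have "0 \<le> k mod int q" "k mod int q < int q" using q1 by auto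
  ultimately have "1 \<le> nat (k mod int q)" "nat (k mod int q) < q" by auto
  with x assms(1) show False by (auto simp: Per_def Fix_def)
qed

lemma Aper_Fix_imp_0:
  assumes "x \<in> Aper \<sigma>" "x \<in> Fix \<sigma> k"
  shows "k = 0"
proof (rule ccontr)
  assume "k \<noteq> 0"
  then have "1 \<le> nat \<bar>k\<bar>" by simp
  moreover have "x \<in> Fix \<sigma> (int (nat \<bar>k\<bar>))" using assms(2) Fix_abs by blast
  ultimately show False using assms(1) by (auto simp: Aper_def Fix_def)
qed

lemma norm_le_supn:
  fixes f :: "'a \<Rightarrow> complex"
  assumes "continuous_on UNIV f"
  shows "cmod (f x) \<le> supn f"
proof -
  have "bounded (f ` UNIV)" by (rule compact_imp_bounded[OF compact_continuous_image[OF assms compact_UNIV]])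
  then obtain B where "\<forall>y\<in>f ` UNIV. norm y \<le> B" by (auto simp: bounded_iff)
  then have "bdd_above (range (\<lambda>x. cmod (f x)))" by (auto intro!: bdd_aboveI)
  then show ?thesis unfolding supn_def by (rule cSUP_upper[rotated]) simp
qed

lemma supn_nonneg: "continuous_on UNIV (f :: 'a \<Rightarrow> complex) \<Longrightarrow> 0 \<le> supn f"
  using norm_le_supn norm_ge_zero order_trans by blast

lemma Hausdorff_space_euclidean: "Hausdorff_space (euclidean :: 'a topology)"
  unfolding Hausdorff_space_def disjnt_def by (metis hausdorff open_openin)

lemma normal_space_euclidean: "normal_space (euclidean :: 'a topology)"
  using compact_UNIV Hausdorff_space_euclidean
  by (intro compact_Hausdorff_or_regular_imp_normal_space) (auto simp: compact_space_def)

lemma urysohn_function: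
  assumes "closed S" "closed T" "S \<inter> T = {}"
  obtains g :: "'a \<Rightarrow> real" where "continuous_on UNIV g" "\<And>x. 0 \<le> g x" "\<And>x. g x \<le> 1"
    "\<And>x. x \<in> S \<Longrightarrow> g x = 1" "\<And>x. x \<in> T \<Longrightarrow> g x = 0"
proof -
  obtain g where g: "continuous_map euclidean (top_of_set {0..1::real}) g" "g ` T \<subseteq> {0}" "g ` S \<subseteq> {1}"
    using Urysohn_lemma[OF normal_space_euclidean, of T S 0 1] assms by (auto simp: disjnt_def)
  then have "continuous_on UNIV g" "\<And>x. g x \<in> {0..1}"
    by (auto simp: continuous_map_in_subtopology)
  then show ?thesis using that[of g] g(2,3) by (auto simp: image_subset_iff)
qed

lemma separating_function:
  assumes "x \<noteq> y"
  obtains f :: "'a \<Rightarrow> complex" where "continuous_on UNIV f" "f x \<noteq> f y"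
proof -
  obtain g :: "'a \<Rightarrow> real" where "continuous_on UNIV g" "g x = 1" "g y = 0"
    by (rule urysohn_function[of "{x}" "{y}"]) (use assms in auto)
  then show ?thesis using that[of "\<lambda>z. complex_of_real (g z)"] by (auto intro: continuous_intros)
qed

lemma closure_nbhd_subset:
  fixes x :: 'a
  assumes "open U" "x \<in> U"
  obtains V where "open V" "x \<in> V" "closure V \<subseteq> U"
proof -
  obtain g :: "'a \<Rightarrow> real" where g: "continuous_on UNIV g" "g x = 1" "\<And>z. z \<notin> U \<Longrightarrow> g z = 0"
    by (rule urysohn_function[of "{x}" "- U"]) (use assms in auto)
  have "open {z. 1/2 < g z}" by (rule open_Collect_less) (intro continuous_intros g(1))+
  moreover have "closed {z. 1/2 \<le> g z}" by (rule closed_Collect_le) (intro continuous_intros g(1))+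
  then have "closure {z. 1/2 < g z} \<subseteq> {z. 1/2 \<le> g z}" by (rule closure_minimal[rotated]) auto
  moreover have "{z. 1/2 \<le> g z} \<subseteq> U" using g(3) by force
  ultimately show ?thesis using that[of "{z. 1/2 < g z}"] g(2) by auto
qed

end

section \<open>The commutant as a Banach algebra\<close>

context compact_homeo
begin

lemma commutant_iff:
  "a \<in> commutant \<sigma> \<longleftrightarrow> a \<in> l1 \<and> (\<forall>k. {x. a k x \<noteq> 0} \<subseteq> Fix \<sigma> k)"
proof
  assume a: "a \<in> commutant \<sigma>"
  have "x \<in> Fix \<sigma> k" if nz: "a k x \<noteq> 0" for k x
  proof (rule ccontr)
    assume "x \<notin> Fix \<sigma> k"
    then have "x \<notin> Fix \<sigma> (- k)" by (simp add: Fix_uminus)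
    then have "ipow \<sigma> (- k) x \<noteq> x" by (simp add: Fix_def)
    then obtain f :: "'a \<Rightarrow> complex" where f: "continuous_on UNIV f" "f (ipow \<sigma> (- k) x) \<noteq> f x"
      by (rule separating_function)
    have "l1_mult \<sigma> a (emb f) k x = l1_mult \<sigma> (emb f) a k x"
      using a f(1) by (simp add: commutant_def)
    then have "a k x * f (ipow \<sigma> (- k) x) = f x * a k x"
      by (simp add: l1_mult_emb_right l1_mult_emb_left)
    with nz f(2) show False by simp
  qed
  with a show "a \<in> l1 \<and> (\<forall>k. {x. a k x \<noteq> 0} \<subseteq> Fix \<sigma> k)" by (auto simp: commutant_def)
next
  assume a: "a \<in> l1 \<and> (\<forall>k. {x. a k x \<noteq> 0} \<subseteq> Fix \<sigma> k)"
  have "a n x * f (ipow \<sigma> (- n) x) = f x * a n x" for f n x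
  proof (cases "a n x = 0")
    case False
    then have "x \<in> Fix \<sigma> (- n)" using a Fix_uminus by blast
    then show ?thesis by (simp add: Fix_def)
  qed simp
  then show "a \<in> commutant \<sigma>"
    using a by (simp add: commutant_def fun_eq_iff l1_mult_emb_right l1_mult_emb_left)
qed

lemma commutantI:
  assumes "\<And>k. continuous_on UNIV (a k)" "(\<lambda>k. supn (a k)) summable_on UNIV"
    and "\<And>k x. a k x \<noteq> 0 \<Longrightarrow> x \<in> Fix \<sigma> k"
  shows "a \<in> commutant \<sigma>"
  using assms by (auto simp: commutant_iff l1_def)

lemma commutant_nonzero_Fix: "a \<in> commutant \<sigma> \<Longrightarrow> a k x \<noteq> 0 \<Longrightarrow> x \<in> Fix \<sigma> k"
  by (auto simp: commutant_iff)

lemma commutant_nonzero_ipow: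
  assumes "a \<in> commutant \<sigma>" "a k x \<noteq> 0"
  shows "ipow \<sigma> (- k) x = x"
proof -
  have "x \<in> Fix \<sigma> (- k)" using commutant_nonzero_Fix[OF assms] Fix_uminus by blast
  then show ?thesis by (simp add: Fix_def)
qed

lemma continuous_on_commutant: "a \<in> commutant \<sigma> \<Longrightarrow> continuous_on UNIV (a k)"
  by (simp add: commutant_def l1_def)

lemma summable_on_supn_commutant: "a \<in> commutant \<sigma> \<Longrightarrow> (\<lambda>k. supn (a k)) summable_on UNIV"
  by (simp add: commutant_def l1_def)

lemma norm_commutant_le_supn: "a \<in> commutant \<sigma> \<Longrightarrow> cmod (a k x) \<le> supn (a k)"
  by (rule norm_le_supn[OF continuous_on_commutant])

lemma supn_commutant_nonneg: "a \<in> commutant \<sigma> \<Longrightarrow> 0 \<le> supn (a k)"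
  by (rule supn_nonneg[OF continuous_on_commutant])

lemma supn_le_l1_norm: "a \<in> commutant \<sigma> \<Longrightarrow> supn (a k) \<le> l1_norm a"
  unfolding l1_norm_def
  using infsum_mono_neutral[of "\<lambda>k'. if k' = k then supn (a k) else 0" "{k}" "\<lambda>k. supn (a k)" UNIV]
  by (auto simp: summable_on_supn_commutant supn_commutant_nonneg)

lemma norm_commutant_le_l1_norm: "a \<in> commutant \<sigma> \<Longrightarrow> cmod (a k x) \<le> l1_norm a"
  using norm_commutant_le_supn supn_le_l1_norm order_trans by blast

lemma l1_norm_nonneg: "a \<in> commutant \<sigma> \<Longrightarrow> 0 \<le> l1_norm a"
  unfolding l1_norm_def by (simp add: infsum_nonneg supn_commutant_nonneg)

lemma summable_on_norm_commutant: "a \<in> commutant \<sigma> \<Longrightarrow> (\<lambda>k. norm (a k x)) summable_on UNIV"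
  by (rule summable_on_comparison_test[OF summable_on_supn_commutant])
    (auto simp: norm_commutant_le_supn)

lemma monomial_in_commutant:
  assumes "continuous_on UNIV f" "{x. f x \<noteq> 0} \<subseteq> Fix \<sigma> k"
  shows "monomial k f \<in> commutant \<sigma>"
proof (rule commutantI)
  show "(\<lambda>n. supn (monomial k f n)) summable_on UNIV"
    by (rule finite_nonzero_values_imp_summable_on) (simp add: monomial_def)
qed (use assms in \<open>auto simp: monomial_def split: if_splits\<close>)

lemma emb_in_commutant: "continuous_on UNIV f \<Longrightarrow> emb f \<in> commutant \<sigma>"
  by (simp add: emb_eq_monomial monomial_in_commutant)

lemma l1_one_in_commutant: "l1_one \<in> commutant \<sigma>"
  unfolding l1_one_def by (rule emb_in_commutant) simp

lemma commutant_add: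
  assumes "a \<in> commutant \<sigma>" "b \<in> commutant \<sigma>"
  shows "(\<lambda>n x. a n x + b n x) \<in> commutant \<sigma>"
proof (rule commutantI)
  show "continuous_on UNIV (\<lambda>x. a n x + b n x)" for n
    using assms by (intro continuous_intros continuous_on_commutant)
  show "(\<lambda>n. supn (\<lambda>x. a n x + b n x)) summable_on UNIV"
  proof (rule summable_on_comparison_test[OF summable_on_add[OF summable_on_supn_commutant[OF assms(1)]
          summable_on_supn_commutant[OF assms(2)]]])
    show "supn (\<lambda>x. a n x + b n x) \<le> supn (a n) + supn (b n)" for n
      by (rule supn_least) (meson add_mono assms norm_commutant_le_supn norm_triangle_le)
    show "0 \<le> supn (\<lambda>x. a n x + b n x)" for n
      using assms by (intro supn_nonneg continuous_intros continuous_on_commutant)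
  qed
  show "x \<in> Fix \<sigma> n" if "a n x + b n x \<noteq> 0" for n x
  proof -
    have "a n x \<noteq> 0 \<or> b n x \<noteq> 0" using that by auto
    then show ?thesis using assms commutant_nonzero_Fix by blast
  qed
qed

lemma commutant_scale:
  assumes "a \<in> commutant \<sigma>"
  shows "(\<lambda>n x. c * a n x) \<in> commutant \<sigma>"
proof (rule commutantI)
  show "continuous_on UNIV (\<lambda>x. c * a n x)" for n
    using assms by (intro continuous_intros continuous_on_commutant)
  show "(\<lambda>n. supn (\<lambda>x. c * a n x)) summable_on UNIV"
  proof (rule summable_on_comparison_test[OF summable_on_cmult_right[OF summable_on_supn_commutant[OF assms],
          of "cmod c"]])
    show "supn (\<lambda>x. c * a n x) \<le> cmod c * supn (a n)" for n
      by (rule supn_least) (simp add: norm_mult assms norm_commutant_le_supn mult_left_mono)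
    show "0 \<le> supn (\<lambda>x. c * a n x)" for n
      using assms by (intro supn_nonneg continuous_intros continuous_on_commutant)
  qed
  show "x \<in> Fix \<sigma> n" if "c * a n x \<noteq> 0" for n x
    using that commutant_nonzero_Fix[OF assms, of n x] by simp
qed

lemma commutant_diff:
  assumes "a \<in> commutant \<sigma>" "b \<in> commutant \<sigma>"
  shows "(\<lambda>n x. a n x - b n x) \<in> commutant \<sigma>"
  using commutant_add[OF assms(1) commutant_scale[OF assms(2), of "- 1"]] by simp

lemma commutant_sum:
  assumes "finite F" "\<And>i. i \<in> F \<Longrightarrow> g i \<in> commutant \<sigma>"
  shows "(\<lambda>n x. \<Sum>i\<in>F. g i n x) \<in> commutant \<sigma>"
  using assms
proof (induction F rule: finite_induct)
  case empty
  show ?case using commutant_scale[OF l1_one_in_commutant, of 0] by simp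
qed (simp add: commutant_add)

lemma l1_mult_commutant_eq:
  assumes "a \<in> commutant \<sigma>" "b \<in> commutant \<sigma>"
  shows "l1_mult \<sigma> a b n x = (\<Sum>\<^sub>\<infinity>k. a k x * b (n - k) x)"
  unfolding l1_mult_def
  by (rule infsum_cong) (use commutant_nonzero_ipow[OF assms(1)] in force)

lemma summable_on_convolution_commutant:
  assumes "a \<in> commutant \<sigma>" "b \<in> commutant \<sigma>"
  shows "(\<lambda>k. a k x * b (n - k) x) summable_on UNIV"
  by (rule summable_on_norm_dominated[OF summable_on_cmult_left[OF summable_on_supn_commutant[OF
          assms(1)], of "l1_norm b"]])
    (auto simp: norm_mult intro!: mult_mono norm_commutant_le_supn norm_commutant_le_l1_norm
      supn_commutant_nonneg assms)

text \<open>The convolution of the sup-norm sequences dominates the product, uniformly in x.\<close>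

lemma commutant_l1_mult:
  assumes a: "a \<in> commutant \<sigma>" and b: "b \<in> commutant \<sigma>"
  shows "l1_mult \<sigma> a b \<in> commutant \<sigma>" "l1_norm (l1_mult \<sigma> a b) \<le> l1_norm a * l1_norm b"
proof -
  have sa: "(\<lambda>k. norm (supn (a k))) summable_on UNIV" and sb: "(\<lambda>k. norm (supn (b k))) summable_on UNIV"
    using summable_on_supn_commutant[OF a] summable_on_supn_commutant[OF b]
      supn_commutant_nonneg[OF a] supn_commutant_nonneg[OF b] by simp_all
  define c where "c n = (\<Sum>\<^sub>\<infinity>k. supn (a k) * supn (b (n - k)))" for n
  have cs: "c summable_on UNIV" unfolding c_def by (rule infsum_convolution(2)[OF sa sb])
  have csum: "infsum c UNIV = l1_norm a * l1_norm b"
    unfolding c_def l1_norm_def by (rule infsum_convolution(3)[OF sa sb])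
  have Ms: "(\<lambda>k. supn (a k) * supn (b (n - k))) summable_on UNIV" for n
  proof (rule summable_on_comparison_test[OF summable_on_cmult_left[OF summable_on_supn_commutant[OF a],
          of "l1_norm b"]])
    show "supn (a k) * supn (b (n - k)) \<le> supn (a k) * l1_norm b" for k
      by (intro mult_left_mono supn_le_l1_norm b supn_commutant_nonneg a)
  qed (intro mult_nonneg_nonneg supn_commutant_nonneg a b)
  have tb: "norm (a k x * b (n - k) (ipow \<sigma> (- k) x)) \<le> supn (a k) * supn (b (n - k))" for n k x
    unfolding norm_mult by (intro mult_mono norm_commutant_le_supn a b supn_commutant_nonneg) auto
  have cont: "continuous_on UNIV (l1_mult \<sigma> a b n)" for n
    unfolding l1_mult_def
    by (rule continuous_on_infsum_dominated[OF _ Ms tb])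
      (intro continuous_intros continuous_on_commutant a b continuous_on_compose_ipow)
  have sle: "supn (l1_mult \<sigma> a b n) \<le> c n" for n
    unfolding l1_mult_def c_def by (rule supn_least, rule norm_infsum_dominated[OF Ms tb])
  have ssum: "(\<lambda>n. supn (l1_mult \<sigma> a b n)) summable_on UNIV"
    by (rule summable_on_comparison_test[OF cs sle]) (rule supn_nonneg[OF cont])
  have "x \<in> Fix \<sigma> n" if nz: "l1_mult \<sigma> a b n x \<noteq> 0" for n x
  proof -
    have "\<exists>k. a k x * b (n - k) x \<noteq> 0"
    proof (rule ccontr)
      assume "\<not> ?thesis"
      then have "l1_mult \<sigma> a b n x = (\<Sum>\<^sub>\<infinity>k::int. 0)"
        unfolding l1_mult_commutant_eq[OF a b] by (intro infsum_cong) auto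
      with nz show False by simp
    qed
    then obtain k where "a k x \<noteq> 0" "b (n - k) x \<noteq> 0" by auto
    then have "x \<in> Fix \<sigma> k" "x \<in> Fix \<sigma> (n - k)" using commutant_nonzero_Fix a b by auto
    from Fix_add[OF this] show ?thesis by simp
  qed
  then show "l1_mult \<sigma> a b \<in> commutant \<sigma>" using cont ssum by (intro commutantI)
  have "l1_norm (l1_mult \<sigma> a b) \<le> infsum c UNIV" unfolding l1_norm_def by (rule infsum_mono[OF ssum cs sle])
  then show "l1_norm (l1_mult \<sigma> a b) \<le> l1_norm a * l1_norm b" using csum by simp
qed

lemma l1_mult_monomial:
  assumes "monomial k f \<in> commutant \<sigma>" "monomial m h \<in> commutant \<sigma>"
  shows "l1_mult \<sigma> (monomial k f) (monomial m h) = monomial (k + m) (\<lambda>x. f x * h x)"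
proof (intro ext)
  fix n x
  have "l1_mult \<sigma> (monomial k f) (monomial m h) n x = monomial k f k x * monomial m h (n - k) x"
    unfolding l1_mult_commutant_eq[OF assms] by (rule infsum_eq_single) (simp add: monomial_def)
  then show "l1_mult \<sigma> (monomial k f) (monomial m h) n x = monomial (k + m) (\<lambda>x. f x * h x) n x"
    by (auto simp: monomial_def)
qed

lemma l1_norm_monomial: "l1_norm (monomial k f) = supn f"
  unfolding l1_norm_def by (subst infsum_eq_single[where m=k]) (auto simp: monomial_def)

lemma l1_norm_one: "l1_norm l1_one = 1"
  by (simp add: l1_one_def emb_eq_monomial l1_norm_monomial)

lemma l1_norm_scale:
  assumes "a \<in> commutant \<sigma>"
  shows "l1_norm (\<lambda>n x. c * a n x) = cmod c * l1_norm a"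
proof -
  have "supn (\<lambda>x. c * a n x) = cmod c * supn (a n)" for n
  proof (cases "c = 0")
    case False
    show ?thesis
    proof (rule antisym)
      show "supn (\<lambda>x. c * a n x) \<le> cmod c * supn (a n)"
        by (rule supn_least) (simp add: norm_mult norm_commutant_le_supn[OF assms] mult_left_mono)
      have "cmod (c * a n x) \<le> supn (\<lambda>x. c * a n x)" for x
        by (rule norm_le_supn) (intro continuous_intros continuous_on_commutant assms)
      then have "supn (a n) \<le> supn (\<lambda>x. c * a n x) / cmod c"
        using False by (intro supn_least) (simp add: norm_mult field_simps)
      then show "cmod c * supn (a n) \<le> supn (\<lambda>x. c * a n x)"
        using False by (simp add: field_simps)
    qed
  qed simp
  then show ?thesis unfolding l1_norm_def by (simp add: infsum_cmult_right')
qed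

definition l1_power :: "(int \<Rightarrow> 'a \<Rightarrow> complex) \<Rightarrow> nat \<Rightarrow> int \<Rightarrow> 'a \<Rightarrow> complex" where
  "l1_power b m = (l1_mult \<sigma> b ^^ m) l1_one"

lemma l1_power_0 [simp]: "l1_power b 0 = l1_one"
  and l1_power_Suc [simp]: "l1_power b (Suc m) = l1_mult \<sigma> b (l1_power b m)"
  by (simp_all add: l1_power_def)

lemma l1_power_in_commutant:
  assumes "b \<in> commutant \<sigma>"
  shows "l1_power b m \<in> commutant \<sigma> \<and> l1_norm (l1_power b m) \<le> l1_norm b ^ m"
proof (induction m)
  case (Suc m)
  then have "l1_norm (l1_power b (Suc m)) \<le> l1_norm b * l1_norm b ^ m"
    using commutant_l1_mult[OF assms] l1_norm_nonneg[OF assms]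
    by (metis l1_power_Suc mult_left_mono order_trans)
  then show ?case using commutant_l1_mult(1)[OF assms] Suc by simp
qed (simp add: l1_one_in_commutant l1_norm_one)

lemma supn_l1_power_le: "b \<in> commutant \<sigma> \<Longrightarrow> supn (l1_power b m k) \<le> l1_norm b ^ m"
  using supn_le_l1_norm l1_power_in_commutant order_trans by blast

lemma norm_l1_power_le: "b \<in> commutant \<sigma> \<Longrightarrow> cmod (l1_power b m k x) \<le> l1_norm b ^ m"
  using norm_commutant_le_supn supn_l1_power_le l1_power_in_commutant order_trans by blast

definition neumann_series :: "(int \<Rightarrow> 'a \<Rightarrow> complex) \<Rightarrow> int \<Rightarrow> 'a \<Rightarrow> complex" where
  "neumann_series b k x = (\<Sum>\<^sub>\<infinity>m. l1_power b m k x)"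

context
  fixes b assumes b: "b \<in> commutant \<sigma>" and norm_b: "l1_norm b < 1"
begin

lemma summable_on_geometric_l1_norm: "(\<lambda>m. l1_norm b ^ m) summable_on UNIV"
  using summable_on_UNIV_nonneg_real_iff[of "\<lambda>m. l1_norm b ^ m"] summable_geometric[of "l1_norm b"]
    l1_norm_nonneg[OF b] norm_b by simp

lemma summable_on_l1_power: "(\<lambda>m. l1_power b m k x) summable_on UNIV"
  by (rule summable_on_norm_dominated[OF summable_on_geometric_l1_norm]) (rule norm_l1_power_le[OF b])

lemma neumann_series_in_commutant: "neumann_series b \<in> commutant \<sigma>"
proof (rule commutantI)
  note P = l1_power_in_commutant[OF b, THEN conjunct1]
  have D2: "(\<lambda>(m,k). supn (l1_power b m k)) summable_on Sigma UNIV (\<lambda>_. UNIV)"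
  proof (rule summable_on_SigmaI[where g="\<lambda>m. l1_norm (l1_power b m)"])
    show "((\<lambda>k. case (m, k) of (m, k) \<Rightarrow> supn (l1_power b m k)) has_sum l1_norm (l1_power b m)) UNIV" for m
      unfolding l1_norm_def using has_sum_infsum[OF summable_on_supn_commutant[OF P]] by simp
    show "(\<lambda>m. l1_norm (l1_power b m)) summable_on UNIV"
      by (rule summable_on_comparison_test[OF summable_on_geometric_l1_norm])
        (use l1_power_in_commutant[OF b] l1_norm_nonneg in \<open>auto simp: zero_le_power\<close>)
  qed (use supn_commutant_nonneg P in auto)
  then have "(\<lambda>(k,m). supn (l1_power b m k)) summable_on UNIV \<times> UNIV"
    by (subst summable_on_swap) (simp add: case_prod_unfold)
  then have Dsum: "(\<lambda>k. \<Sum>\<^sub>\<infinity>m. supn (l1_power b m k)) summable_on UNIV"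
    using summable_on_Sigma_banach[of "\<lambda>k m. supn (l1_power b m k)" UNIV "\<lambda>_. UNIV"] by simp
  have Dk: "(\<lambda>m. supn (l1_power b m k)) summable_on UNIV" for k
    by (rule summable_on_comparison_test[OF summable_on_geometric_l1_norm supn_l1_power_le[OF b]])
      (rule supn_commutant_nonneg[OF P])
  show cont: "continuous_on UNIV (neumann_series b k)" for k
    unfolding neumann_series_def
    by (rule continuous_on_infsum_dominated[OF continuous_on_commutant[OF P]
          summable_on_geometric_l1_norm norm_l1_power_le[OF b]])
  have "supn (neumann_series b k) \<le> (\<Sum>\<^sub>\<infinity>m. supn (l1_power b m k))" for k
    unfolding neumann_series_def
    by (intro supn_least norm_infsum_dominated[OF Dk] norm_commutant_le_supn[OF P])
  then show "(\<lambda>k. supn (neumann_series b k)) summable_on UNIV"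
    by (intro summable_on_comparison_test[OF Dsum] supn_nonneg cont)
  show "x \<in> Fix \<sigma> k" if "neumann_series b k x \<noteq> 0" for k x
  proof -
    have "\<exists>m. l1_power b m k x \<noteq> 0"
    proof (rule ccontr)
      assume "\<not> ?thesis"
      then have "neumann_series b k x = (\<Sum>\<^sub>\<infinity>m::nat. 0)"
        unfolding neumann_series_def by (intro infsum_cong) auto
      with that show False by simp
    qed
    then show ?thesis using commutant_nonzero_Fix[OF P] by blast
  qed
qed

lemma l1_mult_neumann_series: "l1_mult \<sigma> b (neumann_series b) n x = neumann_series b n x - l1_one n x"
proof -
  note P = l1_power_in_commutant[OF b, THEN conjunct1]
  have "(\<lambda>(k,m). supn (b k) * l1_norm b ^ m) summable_on UNIV"
    by (rule summable_on_product_nonneg[OF summable_on_supn_commutant[OF b] summable_on_geometric_l1_norm])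
      (auto intro: supn_commutant_nonneg b l1_norm_nonneg zero_le_power)
  then have "(\<lambda>p. norm ((\<lambda>(k,m). b k x * l1_power b m (n - k) x) p)) summable_on UNIV"
    by (rule summable_on_comparison_test)
      (auto simp: norm_mult intro!: mult_mono norm_commutant_le_supn b norm_l1_power_le[OF b]
        supn_commutant_nonneg)
  then have fam: "(\<lambda>(k,m). b k x * l1_power b m (n - k) x) summable_on UNIV \<times> UNIV"
    by (simp add: abs_summable_summable)
  have "l1_mult \<sigma> b (neumann_series b) n x = (\<Sum>\<^sub>\<infinity>k. b k x * neumann_series b (n - k) x)"
    by (rule l1_mult_commutant_eq[OF b neumann_series_in_commutant])
  also have "\<dots> = (\<Sum>\<^sub>\<infinity>k. \<Sum>\<^sub>\<infinity>m. b k x * l1_power b m (n - k) x)"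
    unfolding neumann_series_def
    by (intro infsum_cong infsum_cmult_right[symmetric] summable_on_l1_power)
  also have "\<dots> = (\<Sum>\<^sub>\<infinity>m. \<Sum>\<^sub>\<infinity>k. b k x * l1_power b m (n - k) x)"
    by (rule infsum_swap_banach) (use fam in simp)
  also have "\<dots> = (\<Sum>\<^sub>\<infinity>m. l1_power b (Suc m) n x)"
    by (rule infsum_cong) (simp add: l1_mult_commutant_eq[OF b P])
  also have "\<dots> = neumann_series b n x - l1_one n x"
    unfolding neumann_series_def using infsum_shift_Suc[OF summable_on_l1_power, of n x] by simp
  finally show ?thesis .
qed

lemma l1_mult_one_minus_neumann_series:
  "l1_mult \<sigma> (\<lambda>n x. l1_one n x - b n x) (neumann_series b) = l1_one"
proof (intro ext)
  fix n x
  note C = neumann_series_in_commutant and D = commutant_diff[OF l1_one_in_commutant b]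
  have "l1_mult \<sigma> (\<lambda>n x. l1_one n x - b n x) (neumann_series b) n x
      = (\<Sum>\<^sub>\<infinity>k. l1_one k x * neumann_series b (n - k) x - b k x * neumann_series b (n - k) x)"
    by (simp add: l1_mult_commutant_eq[OF D C] left_diff_distrib)
  also have "\<dots> = (\<Sum>\<^sub>\<infinity>k. l1_one k x * neumann_series b (n - k) x)
      - (\<Sum>\<^sub>\<infinity>k. b k x * neumann_series b (n - k) x)"
    by (intro infsum_diff summable_on_convolution_commutant l1_one_in_commutant b C)
  also have "\<dots> = l1_mult \<sigma> l1_one (neumann_series b) n x - l1_mult \<sigma> b (neumann_series b) n x"
    by (simp only: l1_mult_commutant_eq[OF l1_one_in_commutant C] l1_mult_commutant_eq[OF b C])
  also have "\<dots> = l1_one n x" by (simp add: l1_mult_neumann_series)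
  finally show "l1_mult \<sigma> (\<lambda>n x. l1_one n x - b n x) (neumann_series b) n x = l1_one n x" .
qed

end

section \<open>Characters\<close>

context
  fixes \<phi> assumes phi: "\<phi> \<in> characters \<sigma>"
begin

lemma character_add: "a \<in> commutant \<sigma> \<Longrightarrow> b \<in> commutant \<sigma> \<Longrightarrow> \<phi> (\<lambda>n x. a n x + b n x) = \<phi> a + \<phi> b"
  and character_scale: "a \<in> commutant \<sigma> \<Longrightarrow> \<phi> (\<lambda>n x. c * a n x) = c * \<phi> a"
  and character_mult: "a \<in> commutant \<sigma> \<Longrightarrow> b \<in> commutant \<sigma> \<Longrightarrow> \<phi> (l1_mult \<sigma> a b) = \<phi> a * \<phi> b"
  using phi by (simp_all add: characters_def)

lemma character_one: "\<phi> l1_one = 1"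
proof -
  obtain a where a: "a \<in> commutant \<sigma>" "\<phi> a \<noteq> 0" using phi by (auto simp: characters_def)
  then have "\<phi> a = \<phi> l1_one * \<phi> a" using character_mult[OF l1_one_in_commutant a(1)] by simp
  with a(2) show ?thesis by simp
qed

lemma character_diff:
  assumes "a \<in> commutant \<sigma>" "b \<in> commutant \<sigma>"
  shows "\<phi> (\<lambda>n x. a n x - b n x) = \<phi> a - \<phi> b"
  using character_add[OF assms(1) commutant_scale[OF assms(2)], of "- 1"]
    character_scale[OF assms(2), of "- 1"] by simp

lemma character_sum:
  assumes "finite F" "\<And>i. i \<in> F \<Longrightarrow> g i \<in> commutant \<sigma>"
  shows "\<phi> (\<lambda>n x. \<Sum>i\<in>F. g i n x) = (\<Sum>i\<in>F. \<phi> (g i))"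
  using assms
proof (induction F rule: finite_induct)
  case empty
  show ?case using character_scale[OF l1_one_in_commutant, of 0] by simp
next
  case (insert j F)
  have "\<phi> (\<lambda>n x. \<Sum>i\<in>insert j F. g i n x) = \<phi> (\<lambda>n x. g j n x + (\<Sum>i\<in>F. g i n x))"
    using insert(1,2) by simp
  also have "\<dots> = \<phi> (g j) + \<phi> (\<lambda>n x. \<Sum>i\<in>F. g i n x)"
    by (rule character_add) (use insert commutant_sum in auto)
  finally show ?case using insert by simp
qed

lemma character_power_family:
  assumes P: "\<And>j. P j \<in> commutant \<sigma>" "P 0 = l1_one"
      "\<And>i j. 0 \<le> i * j \<Longrightarrow> l1_mult \<sigma> (P i) (P j) = P (i + j)"
    and inverse: "\<phi> (P 1) * \<phi> (P (- 1)) = 1"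
  shows "\<phi> (P j) = \<phi> (P 1) powi j"
proof -
  have pos: "\<phi> (P (int m)) = \<phi> (P 1) ^ m" for m
  proof (induction m)
    case (Suc m)
    have "P (int (Suc m)) = l1_mult \<sigma> (P 1) (P (int m))" using P(3)[of 1 "int m"] by (simp add: add.commute)
    then show ?case using character_mult[OF P(1) P(1)] Suc by simp
  qed (simp add: P(2) character_one)
  have neg: "\<phi> (P (- int m)) = \<phi> (P (- 1)) ^ m" for m
  proof (induction m)
    case (Suc m)
    have "P (- int (Suc m)) = l1_mult \<sigma> (P (- 1)) (P (- int m))" using P(3)[of "- 1" "- int m"] by simp
    then show ?case using character_mult[OF P(1) P(1)] Suc by simp
  qed (simp add: P(2) character_one)
  have "\<phi> (P (- 1)) = inverse (\<phi> (P 1))" using inverse by (rule inverse_unique[symmetric])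
  then show ?thesis
    using pos[of "nat j"] neg[of "nat (- j)"] by (cases "j \<ge> 0") (simp_all add: power_int_def power_inverse)
qed

text \<open>If |\<phi> a| > \<parallel>a\<parallel>, then 1 - a / \<phi> a is invertible (Neumann series) but killed by \<phi>.\<close>

lemma norm_character_le:
  assumes a: "a \<in> commutant \<sigma>"
  shows "cmod (\<phi> a) \<le> l1_norm a"
proof (rule ccontr)
  assume "\<not> ?thesis"
  then have lt: "l1_norm a < cmod (\<phi> a)" by simp
  then have nz: "\<phi> a \<noteq> 0" using l1_norm_nonneg[OF a] by auto
  define b where "b = (\<lambda>n x. (1 / \<phi> a) * a n x)"
  have b: "b \<in> commutant \<sigma>" unfolding b_def by (rule commutant_scale[OF a])
  have "l1_norm b = l1_norm a / cmod (\<phi> a)" unfolding b_def l1_norm_scale[OF a] by (simp add: norm_divide)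
  then have "l1_norm b < 1" using lt nz by (simp add: divide_less_eq)
  note C = neumann_series_in_commutant[OF b this] l1_mult_one_minus_neumann_series[OF b this]
  have "\<phi> b = (1 / \<phi> a) * \<phi> a" unfolding b_def by (rule character_scale[OF a])
  then have "\<phi> b = 1" using nz by simp
  then have "\<phi> (\<lambda>n x. l1_one n x - b n x) = 0"
    using character_diff[OF l1_one_in_commutant b] character_one by simp
  then have "\<phi> l1_one = 0"
    using character_mult[OF commutant_diff[OF l1_one_in_commutant b] C(1)] C(2) by simp
  with character_one show False by simp
qed

lemma character_emb_nonzero:
  assumes "continuous_on UNIV H" "\<And>y. H y \<noteq> 0"
  shows "\<phi> (emb H) \<noteq> 0"
proof -
  have c: "continuous_on UNIV (\<lambda>y. 1 / H y)" using assms by (intro continuous_intros) auto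
  have "l1_mult \<sigma> (emb H) (emb (\<lambda>y. 1 / H y)) = l1_one"
    using assms(2) by (simp add: l1_mult_emb_emb l1_one_def)
  then have "\<phi> (emb H) * \<phi> (emb (\<lambda>y. 1 / H y)) = 1"
    using character_mult[OF emb_in_commutant[OF assms(1)] emb_in_commutant[OF c]] character_one by simp
  then show ?thesis by auto
qed

text \<open>Otherwise every point x has an h_x with \<phi>(h_x) = 0 \<noteq> h_x(x); by compactness finitely many
  of them give the nowhere vanishing \<Sum> h_x * cnj h_x, which \<phi> also kills.\<close>

lemma character_emb_eval: "\<exists>x\<^sub>0. \<forall>f. continuous_on UNIV f \<longrightarrow> \<phi> (emb f) = f x\<^sub>0"
proof (rule ccontr)
  assume not_eval: "\<not> ?thesis"
  have "\<exists>h. continuous_on UNIV h \<and> \<phi> (emb h) = 0 \<and> h x \<noteq> 0" for x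
  proof -
    obtain f where f: "continuous_on UNIV f" "\<phi> (emb f) \<noteq> f x" using not_eval by blast
    have "emb (\<lambda>y. f y - \<phi> (emb f)) = (\<lambda>n x. emb f n x - \<phi> (emb f) * l1_one n x)"
      by (auto simp: emb_def l1_one_def fun_eq_iff)
    then have "\<phi> (emb (\<lambda>y. f y - \<phi> (emb f))) = 0"
      using character_diff[OF emb_in_commutant[OF f(1)] commutant_scale[OF l1_one_in_commutant]]
        character_scale[OF l1_one_in_commutant] character_one by simp
    then show ?thesis using f by (intro exI[of _ "\<lambda>y. f y - \<phi> (emb f)"]) (auto intro: continuous_intros)
  qed
  then obtain h where h: "\<And>x. continuous_on UNIV (h x)" "\<And>x. \<phi> (emb (h x)) = 0" "\<And>x. h x x \<noteq> 0"
    by metis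
  have "\<And>x. open (h x -` (- {0}))" using h(1) by (auto intro!: open_vimage)
  moreover have "UNIV \<subseteq> (\<Union>x\<in>UNIV. h x -` (- {0}))" using h(3) by auto
  ultimately obtain F where F: "finite F" "UNIV \<subseteq> (\<Union>x\<in>F. h x -` (- {0}))"
    using compactE_image[OF compact_UNIV] by metis
  define H where "H y = (\<Sum>x\<in>F. h x y * cnj (h x y))" for y
  have "H y \<noteq> 0" for y
  proof -
    obtain x where x: "x \<in> F" "h x y \<noteq> 0" using F(2) by blast
    have "H y = (\<Sum>x\<in>F. of_real ((cmod (h x y))\<^sup>2))" by (simp only: H_def complex_norm_square)
    then have "H y = of_real (\<Sum>x\<in>F. (cmod (h x y))\<^sup>2)" by (simp only: of_real_sum)
    moreover have "(\<Sum>x\<in>F. (cmod (h x y))\<^sup>2) > 0" by (rule sum_pos2[OF F(1) x(1)]) (use x in auto)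
    ultimately show ?thesis by (simp only: of_real_eq_0_iff)
  qed
  moreover have "continuous_on UNIV H" unfolding H_def by (intro continuous_intros h(1))
  moreover have "\<phi> (emb H) = 0"
  proof -
    have ce: "emb (\<lambda>y. h x y * cnj (h x y)) \<in> commutant \<sigma>" for x
      by (intro emb_in_commutant continuous_intros h(1))
    have "\<phi> (emb (\<lambda>y. h x y * cnj (h x y))) = 0" for x
      using character_mult[OF emb_in_commutant[OF h(1)] emb_in_commutant[of "\<lambda>y. cnj (h x y)"]] h
      by (simp add: l1_mult_emb_emb continuous_on_cnj)
    moreover have "emb H = (\<lambda>n z. \<Sum>x\<in>F. emb (\<lambda>y. h x y * cnj (h x y)) n z)"
      by (auto simp: emb_def H_def fun_eq_iff)
    ultimately show ?thesis using character_sum[OF F(1) ce] by simp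
  qed
  ultimately show False using character_emb_nonzero by blast
qed

end

section \<open>The point characters\<close>

lemma interior_Per_pos: "x \<in> interior (Per \<sigma> q) \<Longrightarrow> 1 \<le> q"
  using interior_subset by (fastforce simp: Per_def)

lemma min_int_period_interior_Per:
  assumes x: "x \<in> interior (Per \<sigma> q)"
  shows "min_int_period \<sigma> x = q"
  unfolding min_int_period_def
proof (rule Least_equality)
  have xP: "x \<in> Per \<sigma> q" using x interior_subset by blast
  have "interior (Per \<sigma> q) \<subseteq> interior (Fix \<sigma> (int q))"
    by (rule interior_mono) (auto simp: Per_def Fix_def)
  then show "1 \<le> q \<and> x \<in> interior (Fix \<sigma> (int q))" using x interior_Per_pos by blast
  show "q \<le> m" if m: "1 \<le> m \<and> x \<in> interior (Fix \<sigma> (int m))" for m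
  proof (rule ccontr)
    assume "\<not> q \<le> m"
    moreover have "x \<in> Fix \<sigma> (int m)" using m interior_subset by blast
    ultimately show False using xP m by (auto simp: Per_def Fix_def)
  qed
qed

lemma omega_x_character:
  assumes x: "x \<in> Aper \<sigma>"
  shows "omega_x \<sigma> x \<in> characters \<sigma>"
proof -
  have z: "a k x = 0" if "a \<in> commutant \<sigma>" "k \<noteq> 0" for a k
    using that commutant_nonzero_Fix Aper_Fix_imp_0[OF x] by blast
  have "l1_mult \<sigma> a b 0 x = a 0 x * b 0 x" if "a \<in> commutant \<sigma>" "b \<in> commutant \<sigma>" for a b
    unfolding l1_mult_commutant_eq[OF that] by (subst infsum_eq_single[where m=0]) (auto simp: z[OF that(1)])
  moreover have "omega_x \<sigma> x l1_one \<noteq> 0"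
    using l1_one_in_commutant by (simp add: omega_x_def l1_one_def emb_def)
  ultimately show ?thesis
    using l1_one_in_commutant
    by (auto simp: characters_def omega_x_def commutant_add commutant_scale commutant_l1_mult)
qed

lemma omega_xc_eq:
  "x \<in> interior (Per \<sigma> q) \<Longrightarrow> a \<in> commutant \<sigma> \<Longrightarrow> omega_xc \<sigma> x c a = (\<Sum>\<^sub>\<infinity>j. a (j * int q) x * c powi j)"
  by (simp add: omega_xc_def min_int_period_interior_Per)

lemma summable_on_norm_commutant_multiples:
  assumes "a \<in> commutant \<sigma>" "1 \<le> q"
  shows "(\<lambda>j. norm (a (j * int q) x)) summable_on UNIV"
proof -
  have inj: "inj (\<lambda>j. j * int q)" using assms(2) by (auto simp: inj_on_def)
  have "(\<lambda>k. norm (a k x)) summable_on range (\<lambda>j. j * int q)"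
    by (rule summable_on_subset_banach[OF summable_on_norm_commutant[OF assms(1)]]) simp
  then show ?thesis by (simp add: summable_on_reindex[OF inj] o_def)
qed

text \<open>Only coefficients at multiples of the least period q of x can be nonzero at x, so the
  convolution at x is one of the subsequences indexed by q\<int>.\<close>

lemma convolution_Per_eq:
  assumes xP: "x \<in> Per \<sigma> q" and a: "a \<in> commutant \<sigma>" and b: "b \<in> commutant \<sigma>"
  shows "(\<Sum>\<^sub>\<infinity>k. a k x * b (j * int q - k) x) = (\<Sum>\<^sub>\<infinity>i. a (i * int q) x * b ((j - i) * int q) x)"
proof -
  have inj: "inj (\<lambda>i. i * int q)" using xP by (auto simp: inj_on_def Per_def)
  have "(\<Sum>\<^sub>\<infinity>k. a k x * b (j * int q - k) x) = (\<Sum>\<^sub>\<infinity>k\<in>range (\<lambda>i. i * int q). a k x * b (j * int q - k) x)"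
  proof (rule infsum_cong_neutral)
    fix k assume "k \<in> UNIV - range (\<lambda>i. i * int q)"
    then have "\<not> int q dvd k" by (auto simp: dvd_def mult.commute)
    then show "a k x * b (j * int q - k) x = 0"
      using Per_Fix_imp_dvd[OF xP commutant_nonzero_Fix[OF a]] by auto
  qed auto
  also have "\<dots> = (\<Sum>\<^sub>\<infinity>i. a (i * int q) x * b ((j - i) * int q) x)"
    by (simp add: infsum_reindex[OF inj] o_def left_diff_distrib)
  finally show ?thesis .
qed

context
  fixes x q and c :: complex
  assumes x: "x \<in> interior (Per \<sigma> q)" and c: "cmod c = 1"
begin

lemma summable_on_norm_omega_xc_terms:
  "a \<in> commutant \<sigma> \<Longrightarrow> (\<lambda>j. norm (a (j * int q) x * c powi j)) summable_on UNIV"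
  using summable_on_norm_commutant_multiples[OF _ interior_Per_pos[OF x]] by (simp add: norm_mult norm_power_int c)

lemma summable_on_omega_xc_terms:
  "a \<in> commutant \<sigma> \<Longrightarrow> (\<lambda>j. a (j * int q) x * c powi j) summable_on UNIV"
  by (rule abs_summable_summable[OF summable_on_norm_omega_xc_terms])

lemma omega_xc_l1_mult:
  assumes a: "a \<in> commutant \<sigma>" and b: "b \<in> commutant \<sigma>"
  shows "omega_xc \<sigma> x c (l1_mult \<sigma> a b) = omega_xc \<sigma> x c a * omega_xc \<sigma> x c b"
proof -
  define A where "A i = a (i * int q) x * c powi i" for i
  define B where "B i = b (i * int q) x * c powi i" for i
  have sA: "(\<lambda>i. norm (A i)) summable_on UNIV" and sB: "(\<lambda>i. norm (B i)) summable_on UNIV"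
    unfolding A_def B_def using summable_on_norm_omega_xc_terms a b by blast+
  have "(\<Sum>\<^sub>\<infinity>i. a (i * int q) x * b ((j - i) * int q) x) * c powi j = (\<Sum>\<^sub>\<infinity>i. A i * B (j - i))" for j
  proof -
    have "(\<lambda>i. a (i * int q) x * b ((j - i) * int q) x) summable_on UNIV"
      using summable_on_convolution_term[OF summable_on_norm_commutant_multiples[OF a interior_Per_pos[OF x]]
          summable_on_norm_commutant_multiples[OF b interior_Per_pos[OF x]]] by (simp add: left_diff_distrib)
    then have "(\<Sum>\<^sub>\<infinity>i. a (i * int q) x * b ((j - i) * int q) x) * c powi j
        = (\<Sum>\<^sub>\<infinity>i. a (i * int q) x * b ((j - i) * int q) x * c powi j)"
      by (rule infsum_cmult_left[symmetric])
    also have "\<dots> = (\<Sum>\<^sub>\<infinity>i. A i * B (j - i))"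
    proof (rule infsum_cong)
      fix i
      have "c powi j = c powi i * c powi (j - i)"
        using power_int_add[of c i "j - i"] c by (cases "c = 0") auto
      then show "a (i * int q) x * b ((j - i) * int q) x * c powi j = A i * B (j - i)"
        by (simp add: A_def B_def mult_ac)
    qed
    finally show ?thesis .
  qed
  then have "omega_xc \<sigma> x c (l1_mult \<sigma> a b) = (\<Sum>\<^sub>\<infinity>j. \<Sum>\<^sub>\<infinity>i. A i * B (j - i))"
    using convolution_Per_eq[OF interior_subset[THEN subsetD, OF x] a b]
    by (simp add: omega_xc_eq[OF x] commutant_l1_mult a b l1_mult_commutant_eq)
  also have "\<dots> = (\<Sum>\<^sub>\<infinity>i. A i) * (\<Sum>\<^sub>\<infinity>m. B m)"
    by (rule infsum_convolution(3)[OF sA sB])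
  finally show ?thesis by (simp add: omega_xc_eq[OF x] a b A_def B_def)
qed

lemma omega_xc_character: "omega_xc \<sigma> x c \<in> characters \<sigma>"
proof -
  have "omega_xc \<sigma> x c (\<lambda>n x. a n x + b n x) = omega_xc \<sigma> x c a + omega_xc \<sigma> x c b"
    if "a \<in> commutant \<sigma>" "b \<in> commutant \<sigma>" for a b
    using infsum_add[OF summable_on_omega_xc_terms summable_on_omega_xc_terms, OF that]
    by (simp add: omega_xc_eq[OF x] commutant_add that distrib_right)
  moreover have "omega_xc \<sigma> x c (\<lambda>n x. d * a n x) = d * omega_xc \<sigma> x c a" if "a \<in> commutant \<sigma>" for a d
    using infsum_cmult_right[OF summable_on_omega_xc_terms[OF that], of d]
    by (simp add: omega_xc_eq[OF x] commutant_scale that ac_simps)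
  moreover have "omega_xc \<sigma> x c l1_one = 1"
    unfolding omega_xc_eq[OF x l1_one_in_commutant]
    by (subst infsum_eq_single[where m=0]) (use interior_Per_pos[OF x] in \<open>auto simp: l1_one_def emb_def\<close>)
  ultimately show ?thesis
    using l1_one_in_commutant omega_xc_l1_mult
    by (auto simp: characters_def omega_xc_def[of \<sigma> x c] intro!: bexI[of _ l1_one])
qed

end

section \<open>Density of aperiodic and interior periodic points\<close>

text \<open>Inside an open V \<subseteq> Fix_n take the least p for which some nonempty open subset W of V lies in
  Fix_p; removing the closed sets Fix_m, 1 \<le> m < p, from W leaves a nonempty open subset of Per_p.\<close>

lemma open_Fix_meets_interior_Per:
  assumes V: "open V" "V \<noteq> {}" "V \<subseteq> Fix \<sigma> (int n)" and n: "1 \<le> n"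
  shows "\<exists>y\<in>V. \<exists>p. 1 \<le> p \<and> p dvd n \<and> y \<in> interior (Per \<sigma> p)"
proof -
  define P where "P p \<longleftrightarrow> 1 \<le> p \<and> (\<exists>W. open W \<and> W \<noteq> {} \<and> W \<subseteq> V \<and> W \<subseteq> Fix \<sigma> (int p))" for p
  have "P n" using V n by (auto simp: P_def)
  define p where "p = (LEAST p. P p)"
  have "P p" unfolding p_def by (rule LeastI[where P=P, OF \<open>P n\<close>])
  then obtain W where W: "open W" "W \<noteq> {}" "W \<subseteq> V" "W \<subseteq> Fix \<sigma> (int p)" and p1: "1 \<le> p"
    by (auto simp: P_def)
  define W' where "W' = W - (\<Union>m\<in>{1..<p}. Fix \<sigma> (int m))"
  have oW': "open W'" unfolding W'_def using W(1) closed_Fix by (intro open_Diff closed_UN) auto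
  have "W' \<noteq> {}"
  proof
    assume "W' = {}"
    then have "W \<subseteq> (\<Union>m\<in>{1..<p}. Fix \<sigma> (int m))" unfolding W'_def by blast
    then have "\<exists>m\<in>{1..<p}. \<exists>W2. open W2 \<and> W2 \<noteq> {} \<and> W2 \<subseteq> W \<and> W2 \<subseteq> Fix \<sigma> (int m)"
      by (intro finite_closed_cover_contains_open W(1,2)) (auto intro: closed_Fix)
    then obtain m W2 where m: "m \<in> {1..<p}" "open W2" "W2 \<noteq> {}" "W2 \<subseteq> W" "W2 \<subseteq> Fix \<sigma> (int m)"
      by blast
    then have "P m" unfolding P_def using W(3) by (intro conjI exI[of _ W2]) auto
    then have "p \<le> m" unfolding p_def by (rule Least_le)
    with m(1) show False by simp
  qed
  then obtain y where y: "y \<in> W'" by blast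
  have sub: "W' \<subseteq> Per \<sigma> p" unfolding W'_def Per_def using W(4) p1 by (auto simp: Fix_def)
  have "y \<in> interior (Per \<sigma> p)" using interior_maximal[OF sub oW'] y by blast
  moreover have "y \<in> V" using y W unfolding W'_def by blast
  moreover have "int p dvd int n" using Per_Fix_imp_dvd sub y V(3) \<open>y \<in> V\<close> by blast
  then have "p dvd n" by simp
  ultimately show ?thesis using p1 by blast
qed

text \<open>If an open U misses Aper, the closed sets Fix_q \<inter> closure V, q \<ge> 1, cover a neighbourhood
  V of a point with closure V \<subseteq> U; by Baire one of them has nonempty interior.\<close>

lemma open_meets_Aper_or_interior_Per:
  assumes U: "open U" "U \<noteq> {}"
  shows "\<exists>y\<in>U. y \<in> Aper \<sigma> \<or> (\<exists>p. 1 \<le> p \<and> y \<in> interior (Per \<sigma> p))"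
proof (cases "U \<inter> Aper \<sigma> = {}")
  case False
  then show ?thesis by blast
next
  case True
  obtain x where "x \<in> U" using U by blast
  then obtain V where V: "open V" "x \<in> V" "closure V \<subseteq> U" using closure_nbhd_subset[OF U(1)] by blast
  define G where "G = (\<lambda>q::nat. Fix \<sigma> (int (Suc q)) \<inter> closure V) ` UNIV"
  have "\<exists>T\<in>G. interior T \<noteq> {}"
  proof (rule ccontr)
    assume "\<not> ?thesis"
    then have "\<And>T. T \<in> G \<Longrightarrow> closedin euclidean T \<and> euclidean interior_of T = {}"
      unfolding G_def by (auto intro!: closed_Int closed_Fix)
    moreover have "locally_compact_space (euclidean :: 'a topology) \<and> regular_space (euclidean :: 'a topology)"
      using compact_imp_locally_compact_space[of "euclidean :: 'a topology"] compact_UNIV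
        normal_t1_imp_regular_space[OF normal_space_euclidean Hausdorff_imp_t1_space[OF Hausdorff_space_euclidean]]
      by (simp add: compact_space_def)
    ultimately have "euclidean interior_of \<Union>G = {}"
      by (intro Baire_category_alt) (auto simp: G_def)
    moreover have "V \<subseteq> \<Union>G"
    proof
      fix z assume z: "z \<in> V"
      then have "z \<notin> Aper \<sigma>" using True V(3) closure_subset by blast
      then obtain p :: nat where "1 \<le> p" "ipow \<sigma> (int p) z = z" by (auto simp: Aper_def)
      then have "z \<in> Fix \<sigma> (int (Suc (p - 1))) \<inter> closure V" using z closure_subset by (auto simp: Fix_def)
      then show "z \<in> \<Union>G" unfolding G_def by blast
    qed
    then have "V \<subseteq> interior (\<Union>G)" using V(1) interior_maximal by blast
    ultimately show False using V(2) by simp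
  qed
  then obtain q where q: "interior (Fix \<sigma> (int (Suc q)) \<inter> closure V) \<noteq> {}" unfolding G_def by blast
  define W where "W = interior (Fix \<sigma> (int (Suc q)) \<inter> closure V)"
  have "open W" "W \<noteq> {}" "W \<subseteq> Fix \<sigma> (int (Suc q))" "W \<subseteq> U"
    using q V(3) interior_subset unfolding W_def by auto
  then obtain y p where "y \<in> W" "1 \<le> p" "y \<in> interior (Per \<sigma> p)"
    using open_Fix_meets_interior_Per[of W "Suc q"] by auto
  then show ?thesis using \<open>W \<subseteq> U\<close> by blast
qed

section \<open>Characters on monomials\<close>

lemma interior_Fix_if_nonzero:
  fixes f :: "'a \<Rightarrow> complex"
  assumes "continuous_on UNIV f" "{x. f x \<noteq> 0} \<subseteq> Fix \<sigma> k" "f x\<^sub>0 \<noteq> 0"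
  shows "x\<^sub>0 \<in> interior (Fix \<sigma> k)"
proof -
  have "{x. f x \<noteq> 0} \<subseteq> interior (Fix \<sigma> k)"
    by (rule interior_maximal[OF assms(2) open_nonzero_set[OF assms(1)]])
  then show ?thesis using assms(3) by blast
qed

lemma omega_x_monomial:
  assumes y: "y \<in> Aper \<sigma>" and f: "continuous_on UNIV f" "{x. f x \<noteq> 0} \<subseteq> Fix \<sigma> k"
  shows "omega_x \<sigma> y (monomial k f) = f y"
proof (cases "k = 0")
  case False
  then have "f y = 0" using f(2) Aper_Fix_imp_0[OF y] by blast
  then show ?thesis using False monomial_in_commutant[OF f] by (simp add: omega_x_def monomial_def)
qed (use monomial_in_commutant[OF f] in \<open>simp add: omega_x_def monomial_def\<close>)

lemma omega_xc_monomial: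
  assumes y: "y \<in> interior (Per \<sigma> p)" and f: "continuous_on UNIV f" "{x. f x \<noteq> 0} \<subseteq> Fix \<sigma> k"
  shows "omega_xc \<sigma> y d (monomial k f) = f y * d powi (k div int p)"
proof -
  have p: "1 \<le> p" "min_int_period \<sigma> y = p"
    using interior_Per_pos[OF y] min_int_period_interior_Per[OF y] by auto
  have "omega_xc \<sigma> y d (monomial k f) = (\<Sum>\<^sub>\<infinity>j. monomial k f (j * int p) y * d powi j)"
    using monomial_in_commutant[OF f] by (simp add: omega_xc_def p)
  also have "\<dots> = f y * d powi (k div int p)"
  proof (cases "int p dvd k")
    case True
    then obtain j0 where k: "k = j0 * int p" by (auto simp: dvd_def mult.commute)
    show ?thesis
      by (subst infsum_eq_single[where m=j0]) (use p k in \<open>auto simp: monomial_def\<close>)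
  next
    case False
    then have "f y = 0" using f(2) Per_Fix_imp_dvd[of y p k] y interior_subset by blast
    moreover have "(\<Sum>\<^sub>\<infinity>j. monomial k f (j * int p) y * d powi j) = (\<Sum>\<^sub>\<infinity>j::int. 0)"
      by (rule infsum_cong) (simp add: monomial_def \<open>f y = 0\<close>)
    ultimately show ?thesis by simp
  qed
  finally show ?thesis .
qed

lemma min_int_period_interior_Fix:
  assumes x: "x \<in> interior (Fix \<sigma> (int q))" and q: "1 \<le> q"
  shows "1 \<le> min_int_period \<sigma> x" "x \<in> interior (Fix \<sigma> (int (min_int_period \<sigma> x)))"
proof -
  have "1 \<le> q \<and> x \<in> interior (Fix \<sigma> (int q))" using assms by simp
  then have "1 \<le> min_int_period \<sigma> x \<and> x \<in> interior (Fix \<sigma> (int (min_int_period \<sigma> x)))"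
    unfolding min_int_period_def by (rule LeastI)
  then show "1 \<le> min_int_period \<sigma> x" "x \<in> interior (Fix \<sigma> (int (min_int_period \<sigma> x)))" by auto
qed

text \<open>The k with x in the interior of Fix_k form a subgroup of \<int>, as Fix_a \<inter> Fix_b \<subseteq> Fix_(gcd a b).\<close>

lemma min_int_period_dvd:
  assumes x: "x \<in> interior (Fix \<sigma> (int q))" and q: "1 \<le> q" and xk: "x \<in> interior (Fix \<sigma> k)"
  shows "int (min_int_period \<sigma> x) dvd k"
proof (cases "k = 0")
  case False
  define n where "n = min_int_period \<sigma> x"
  note n = min_int_period_interior_Fix[OF x q, folded n_def]
  define g where "g = gcd k (int n)"
  have g0: "g > 0" using False by (simp add: g_def)
  have "interior (Fix \<sigma> k \<inter> Fix \<sigma> (int n)) \<subseteq> interior (Fix \<sigma> g)"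
    unfolding g_def using Fix_gcd by (intro interior_mono) blast
  then have "x \<in> interior (Fix \<sigma> (int (nat g)))" using xk n(2) g0 by auto
  then have "1 \<le> nat g \<and> x \<in> interior (Fix \<sigma> (int (nat g)))" using g0 by simp
  then have "n \<le> nat g" unfolding n_def min_int_period_def by (rule Least_le)
  moreover have "g \<le> int n" unfolding g_def using n(1) by (simp add: zdvd_imp_le)
  ultimately have "g = int n" using g0 by linarith
  then show ?thesis by (metis g_def gcd_dvd1 n_def)
qed simp

definition point_characters :: "((int \<Rightarrow> 'a \<Rightarrow> complex) \<Rightarrow> complex) set" where
  "point_characters = omega_x \<sigma> ` Aper \<sigma> \<union>
     {omega_xc \<sigma> x c | x c. x \<in> (\<Union>q\<in>{1..}. interior (Per \<sigma> q)) \<and> cmod c = 1}"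

lemma point_characters_subset: "point_characters \<subseteq> characters \<sigma>"
  unfolding point_characters_def using omega_x_character omega_xc_character by auto

lemma omega_x_in_point_characters: "y \<in> Aper \<sigma> \<Longrightarrow> omega_x \<sigma> y \<in> point_characters"
  by (simp add: point_characters_def)

lemma omega_xc_in_point_characters:
  "y \<in> interior (Per \<sigma> p) \<Longrightarrow> cmod d = 1 \<Longrightarrow> omega_xc \<sigma> y d \<in> point_characters"
  using interior_Per_pos[of y p] by (auto simp: point_characters_def)

context
  fixes \<phi> x\<^sub>0
  assumes phi: "\<phi> \<in> characters \<sigma>"
    and x\<^sub>0: "\<And>f. continuous_on UNIV f \<Longrightarrow> \<phi> (emb f) = f x\<^sub>0"
begin

text \<open>Write f = sqrt|f| * g with g continuous and vanishing where f does.\<close>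

lemma character_monomial_eq_0:
  assumes f: "continuous_on UNIV f" "{x. f x \<noteq> 0} \<subseteq> Fix \<sigma> k" and z: "f x\<^sub>0 = 0"
  shows "\<phi> (monomial k f) = 0"
proof -
  define u where "u x = complex_of_real (sqrt (cmod (f x)))" for x
  define v where "v x = div_sqrt_norm (f x)" for x
  have u: "continuous_on UNIV u" unfolding u_def by (intro continuous_intros f)
  have "continuous_on UNIV v"
    unfolding v_def using continuous_on_compose[OF f(1) continuous_on_subset[OF continuous_on_div_sqrt_norm]]
    by (simp add: o_def)
  moreover have "{x. v x \<noteq> 0} \<subseteq> Fix \<sigma> k" using f(2) by (auto simp: v_def div_sqrt_norm_eq_0_iff)
  ultimately have v: "monomial k v \<in> commutant \<sigma>" by (rule monomial_in_commutant)
  have "l1_mult \<sigma> (emb u) (monomial k v) = monomial k f"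
    by (auto simp: fun_eq_iff l1_mult_emb_left monomial_def u_def v_def sqrt_norm_mult_div_sqrt_norm)
  then have "\<phi> (monomial k f) = \<phi> (emb u) * \<phi> (monomial k v)"
    using character_mult[OF phi emb_in_commutant[OF u] v] by simp
  also have "\<phi> (emb u) = 0" using x\<^sub>0[OF u] z by (simp add: u_def)
  finally show ?thesis by simp
qed

lemma character_monomial_not_interior_Fix:
  assumes nI: "\<forall>q\<ge>1. x\<^sub>0 \<notin> interior (Fix \<sigma> (int q))"
    and f: "continuous_on UNIV f" "{x. f x \<noteq> 0} \<subseteq> Fix \<sigma> k"
  shows "\<phi> (monomial k f) = f x\<^sub>0"
proof (cases "k = 0")
  case True
  then show ?thesis using x\<^sub>0[OF f(1)] by (simp add: emb_eq_monomial)
next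
  case False
  have "f x\<^sub>0 = 0"
  proof (rule ccontr)
    assume "f x\<^sub>0 \<noteq> 0"
    then have "x\<^sub>0 \<in> interior (Fix \<sigma> (int (nat \<bar>k\<bar>)))"
      unfolding Fix_abs by (rule interior_Fix_if_nonzero[OF f])
    moreover have "1 \<le> nat \<bar>k\<bar>" using False by simp
    ultimately show False using nI by blast
  qed
  then show ?thesis using character_monomial_eq_0[OF f] by simp
qed

text \<open>The powers G^|j| \<delta>^(jn) of a bump G at x0 supported in Fix_n are multiplicative in j and have
  norm at most 1; \<phi> maps the product of the members j = 1 and j = -1 to G(x0)^2 = 1, so both
  values are unimodular.\<close>

lemma character_bump_powers:
  assumes G: "continuous_on UNIV G" "G x\<^sub>0 = 1" "\<And>y. cmod (G y) \<le> 1" "{y. G y \<noteq> 0} \<subseteq> Fix \<sigma> (int n)"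
  obtains c where "cmod c = 1" "\<And>j. \<phi> (monomial (j * int n) (\<lambda>y. G y ^ nat \<bar>j\<bar>)) = c powi j"
proof -
  define P where "P j = monomial (j * int n) (\<lambda>y. G y ^ nat \<bar>j\<bar>)" for j
  have supp: "{y. G y ^ nat \<bar>j\<bar> \<noteq> 0} \<subseteq> Fix \<sigma> (j * int n)" for j
    using G(4) Fix_mult by (cases "j = 0") auto
  have P: "P j \<in> commutant \<sigma>" for j
    unfolding P_def by (intro monomial_in_commutant supp continuous_intros G(1))
  have mult: "l1_mult \<sigma> (P i) (P j) = P (i + j)" if "i * j \<ge> 0" for i j
  proof -
    have "nat \<bar>i + j\<bar> = nat \<bar>i\<bar> + nat \<bar>j\<bar>" using that by (auto simp: zero_le_mult_iff)
    then show ?thesis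
      using l1_mult_monomial[OF P[of i, unfolded P_def] P[of j, unfolded P_def]]
      by (simp add: P_def algebra_simps power_add)
  qed
  have P0: "P 0 = l1_one" by (simp add: P_def l1_one_def emb_eq_monomial)
  have "l1_mult \<sigma> (P 1) (P (- 1)) = emb (\<lambda>x. G x * G x)"
    using l1_mult_monomial[OF P[of 1, unfolded P_def] P[of "- 1", unfolded P_def]]
    by (simp add: P_def emb_eq_monomial)
  then have "\<phi> (P 1) * \<phi> (P (- 1)) = \<phi> (emb (\<lambda>x. G x * G x))"
    using character_mult[OF phi P[of 1] P[of "- 1"]] by simp
  then have inverse: "\<phi> (P 1) * \<phi> (P (- 1)) = 1" using x\<^sub>0[of "\<lambda>x. G x * G x"] G by (simp add: continuous_on_mult)
  have "cmod (\<phi> (P j)) \<le> 1" if "\<bar>j\<bar> = 1" for j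
  proof -
    have "l1_norm (P j) \<le> 1" unfolding P_def l1_norm_monomial using that G(3) by (intro supn_least) simp
    then show ?thesis using norm_character_le[OF phi P, of j] by linarith
  qed
  then have "cmod (\<phi> (P 1)) \<le> 1" "cmod (\<phi> (P (- 1))) \<le> 1" by simp_all
  moreover have "cmod (\<phi> (P 1)) * cmod (\<phi> (P (- 1))) = 1" using inverse by (metis norm_mult norm_one)
  ultimately have "cmod (\<phi> (P 1)) = 1"
    by (metis antisym mult_left_le_one_le mult_le_one norm_ge_zero mult.commute)
  then show ?thesis using that character_power_family[OF phi P P0 mult inverse] by (simp add: P_def)
qed

lemma character_monomial_interior_Fix:
  assumes x: "x\<^sub>0 \<in> interior (Fix \<sigma> (int q))" and q: "1 \<le> q"
  obtains c where "cmod c = 1" "\<And>k f. continuous_on UNIV f \<Longrightarrow> {x. f x \<noteq> 0} \<subseteq> Fix \<sigma> k \<Longrightarrow>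
           \<phi> (monomial k f) = f x\<^sub>0 * c powi (k div int (min_int_period \<sigma> x\<^sub>0))"
proof -
  define n where "n = min_int_period \<sigma> x\<^sub>0"
  note n = min_int_period_interior_Fix[OF x q, folded n_def]
  obtain g :: "'a \<Rightarrow> real" where g: "continuous_on UNIV g" "\<And>z. 0 \<le> g z" "\<And>z. g z \<le> 1"
      "\<And>z. z \<in> {x\<^sub>0} \<Longrightarrow> g z = 1" "\<And>z. z \<in> - interior (Fix \<sigma> (int n)) \<Longrightarrow> g z = 0"
    by (rule urysohn_function[of "{x\<^sub>0}" "- interior (Fix \<sigma> (int n))"]) (use n(2) in auto)
  define G where "G y = complex_of_real (g y)" for y
  have G: "continuous_on UNIV G" "G x\<^sub>0 = 1" "\<And>y. cmod (G y) \<le> 1" "{y. G y \<noteq> 0} \<subseteq> Fix \<sigma> (int n)"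
    using g interior_subset[of "Fix \<sigma> (int n)"] by (fastforce simp: G_def intro: continuous_intros)+
  obtain c where c: "cmod c = 1" "\<And>j. \<phi> (monomial (j * int n) (\<lambda>y. G y ^ nat \<bar>j\<bar>)) = c powi j"
    using character_bump_powers[OF G] by blast
  have "\<phi> (monomial k f) = f x\<^sub>0 * c powi (k div int n)"
    if f: "continuous_on UNIV f" "{x. f x \<noteq> 0} \<subseteq> Fix \<sigma> k" for k f
  proof (cases "f x\<^sub>0 = 0")
    case True
    then show ?thesis using character_monomial_eq_0[OF f] by simp
  next
    case False
    then obtain j where k: "k = j * int n"
      using min_int_period_dvd[OF x q interior_Fix_if_nonzero[OF f]] by (auto simp: n_def dvd_def mult.commute)
    define h where "h y = f y - f x\<^sub>0 * G y ^ nat \<bar>j\<bar>" for y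
    have supp: "{y. G y ^ nat \<bar>j\<bar> \<noteq> 0} \<subseteq> Fix \<sigma> k"
      using G(4) Fix_mult by (cases "j = 0") (auto simp: k)
    have "h y \<noteq> 0 \<Longrightarrow> f y \<noteq> 0 \<or> G y ^ nat \<bar>j\<bar> \<noteq> 0" for y by (auto simp: h_def)
    then have h: "continuous_on UNIV h" "{x. h x \<noteq> 0} \<subseteq> Fix \<sigma> k"
      using f(2) supp by (auto simp: h_def[abs_def] intro!: continuous_intros G(1) f(1))
    have "monomial k f = (\<lambda>m y. monomial k h m y + f x\<^sub>0 * monomial k (\<lambda>y. G y ^ nat \<bar>j\<bar>) m y)"
      by (auto simp: fun_eq_iff monomial_def h_def)
    moreover have "monomial k (\<lambda>y. G y ^ nat \<bar>j\<bar>) \<in> commutant \<sigma>"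
      by (intro monomial_in_commutant continuous_intros G(1) supp)
    ultimately have "\<phi> (monomial k f) = \<phi> (monomial k h) + f x\<^sub>0 * c powi j"
      using character_add[OF phi monomial_in_commutant[OF h] commutant_scale] character_scale[OF phi] c(2)
      by (simp add: k)
    also have "\<phi> (monomial k h) = 0" by (rule character_monomial_eq_0[OF h]) (simp add: h_def G(2))
    finally show ?thesis using n(1) by (simp add: k)
  qed
  then show ?thesis using that c(1) by (simp add: n_def)
qed

lemma point_character_near_not_interior_Fix:
  assumes nI: "\<forall>q\<ge>1. x\<^sub>0 \<notin> interior (Fix \<sigma> (int q))" and U: "open U" "x\<^sub>0 \<in> U"
  shows "\<exists>\<omega>\<in>point_characters. \<exists>y\<in>U. \<forall>k f. continuous_on UNIV f \<longrightarrow> {x. f x \<noteq> 0} \<subseteq> Fix \<sigma> k \<longrightarrow>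
           \<omega> (monomial k f) - \<phi> (monomial k f) = f y - f x\<^sub>0"
proof -
  obtain y where y: "y \<in> U" "y \<in> Aper \<sigma> \<or> (\<exists>p. 1 \<le> p \<and> y \<in> interior (Per \<sigma> p))"
    using open_meets_Aper_or_interior_Per[OF U(1)] U(2) by blast
  note \<phi>_eq = character_monomial_not_interior_Fix[OF nI]
  show ?thesis
  proof (cases "y \<in> Aper \<sigma>")
    case True
    show ?thesis
    proof (intro bexI[OF _ omega_x_in_point_characters[OF True]] bexI[OF _ y(1)] allI impI)
      fix k and f :: "'a \<Rightarrow> complex" assume f: "continuous_on UNIV f" "{x. f x \<noteq> 0} \<subseteq> Fix \<sigma> k"
      show "omega_x \<sigma> y (monomial k f) - \<phi> (monomial k f) = f y - f x\<^sub>0"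
        using omega_x_monomial[OF True f] \<phi>_eq[OF f] by simp
    qed
  next
    case False
    then obtain p where p: "y \<in> interior (Per \<sigma> p)" using y(2) by blast
    show ?thesis
    proof (intro bexI[OF _ omega_xc_in_point_characters[OF p, of 1]] bexI[OF _ y(1)] allI impI)
      fix k and f :: "'a \<Rightarrow> complex" assume f: "continuous_on UNIV f" "{x. f x \<noteq> 0} \<subseteq> Fix \<sigma> k"
      show "omega_xc \<sigma> y 1 (monomial k f) - \<phi> (monomial k f) = f y - f x\<^sub>0"
        using omega_xc_monomial[OF p f] \<phi>_eq[OF f] by simp
    qed simp
  qed
qed

text \<open>If n is least with x0 in the interior of Fix_n and \<phi>(f \<delta>^(jn)) = f(x0) c^j, pick y in the
  interior of some Per_p near x0 with p | n, and d with d^(n/p) = c; then \<omega>_(y,d)(f \<delta>^(jn)) = f(y) c^j.\<close>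

lemma point_character_near_interior_Fix:
  assumes x: "x\<^sub>0 \<in> interior (Fix \<sigma> (int q))" "1 \<le> q" and U: "open U" "x\<^sub>0 \<in> U"
  shows "\<exists>\<omega>\<in>point_characters. \<exists>y\<in>U. \<forall>k f. continuous_on UNIV f \<longrightarrow> {x. f x \<noteq> 0} \<subseteq> Fix \<sigma> k \<longrightarrow>
           cmod (\<omega> (monomial k f) - \<phi> (monomial k f)) \<le> cmod (f y - f x\<^sub>0)"
proof -
  define n where "n = min_int_period \<sigma> x\<^sub>0"
  note n = min_int_period_interior_Fix[OF x, folded n_def]
  obtain c where c: "cmod c = 1" "\<And>k f. continuous_on UNIV f \<Longrightarrow> {x. f x \<noteq> 0} \<subseteq> Fix \<sigma> k \<Longrightarrow>
      \<phi> (monomial k f) = f x\<^sub>0 * c powi (k div int n)"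
    using character_monomial_interior_Fix[OF x] unfolding n_def by blast
  define V where "V = U \<inter> interior (Fix \<sigma> (int n))"
  have "open V" "V \<noteq> {}" "V \<subseteq> Fix \<sigma> (int n)" using U n(2) interior_subset by (auto simp: V_def)
  from open_Fix_meets_interior_Per[OF this n(1)] obtain y p
    where y: "y \<in> V" "p dvd n" "y \<in> interior (Per \<sigma> p)" by blast
  obtain m where nm: "n = p * m" using y(2) by (auto simp: dvd_def)
  have "0 < m" using nm n(1) by (cases m) auto
  then obtain d where d: "cmod d = 1" "d ^ m = c" using unit_circle_root[OF c(1)] by blast
  have "cmod (omega_xc \<sigma> y d (monomial k f) - \<phi> (monomial k f)) \<le> cmod (f y - f x\<^sub>0)"
    if f: "continuous_on UNIV f" "{x. f x \<noteq> 0} \<subseteq> Fix \<sigma> k" for k f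
  proof (cases "f x\<^sub>0 = 0")
    case True
    then show ?thesis using omega_xc_monomial[OF y(3) f] c(2)[OF f] by (simp add: norm_mult norm_power_int d(1))
  next
    case False
    then obtain j where k: "k = j * int n"
      using min_int_period_dvd[OF x interior_Fix_if_nonzero[OF f]] by (auto simp: n_def dvd_def mult.commute)
    have "int p \<noteq> 0" using interior_Per_pos[OF y(3)] by simp
    then have "k div int p = int m * j" by (simp add: k nm algebra_simps)
    then have "d powi (k div int p) = c powi j" by (simp add: power_int_mult d(2)[symmetric])
    then have "omega_xc \<sigma> y d (monomial k f) - \<phi> (monomial k f) = (f y - f x\<^sub>0) * c powi j"
      using omega_xc_monomial[OF y(3) f] c(2)[OF f] n(1) by (simp add: k algebra_simps)
    then show ?thesis by (simp add: norm_mult norm_power_int c(1))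
  qed
  moreover have "y \<in> U" using y(1) by (simp add: V_def)
  ultimately show ?thesis using omega_xc_in_point_characters[OF y(3) d(1)] by blast
qed

lemma point_character_near_on_monomials:
  assumes "open U" "x\<^sub>0 \<in> U"
  obtains \<omega> y where "\<omega> \<in> point_characters" "y \<in> U"
    "\<And>k f. continuous_on UNIV f \<Longrightarrow> {x. f x \<noteq> 0} \<subseteq> Fix \<sigma> k \<Longrightarrow>
       cmod (\<omega> (monomial k f) - \<phi> (monomial k f)) \<le> cmod (f y - f x\<^sub>0)"
proof (cases "\<exists>q. 1 \<le> q \<and> x\<^sub>0 \<in> interior (Fix \<sigma> (int q))")
  case True
  then obtain q where "x\<^sub>0 \<in> interior (Fix \<sigma> (int q))" "1 \<le> q" by blast
  from point_character_near_interior_Fix[OF this assms] show ?thesis using that by blast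
next
  case False
  then have "\<forall>q\<ge>1. x\<^sub>0 \<notin> interior (Fix \<sigma> (int q))" by blast
  from point_character_near_not_interior_Fix[OF this assms] obtain \<omega> y where
    "\<omega> \<in> point_characters" "y \<in> U" "\<And>k f. continuous_on UNIV f \<Longrightarrow> {x. f x \<noteq> 0} \<subseteq> Fix \<sigma> k \<Longrightarrow>
       \<omega> (monomial k f) - \<phi> (monomial k f) = f y - f x\<^sub>0"
    by blast
  then show ?thesis using that by simp
qed

end

section \<open>Density and separation\<close>

definition truncate :: "int set \<Rightarrow> (int \<Rightarrow> 'a \<Rightarrow> complex) \<Rightarrow> int \<Rightarrow> 'a \<Rightarrow> complex" where
  "truncate G a = (\<lambda>k x. if k \<in> G then a k x else 0)"

lemma truncate_eq_sum:
  assumes "finite G"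
  shows "truncate G a = (\<lambda>k x. \<Sum>j\<in>G. monomial j (a j) k x)"
proof (intro ext)
  fix k x
  have "(\<Sum>j\<in>G. monomial j (a j) k x) = (\<Sum>j\<in>G. if k = j then a k x else 0)"
    by (rule sum.cong) (auto simp: monomial_def)
  then show "truncate G a k x = (\<Sum>j\<in>G. monomial j (a j) k x)" using assms by (simp add: truncate_def)
qed

lemma monomial_coefficient_in_commutant: "a \<in> commutant \<sigma> \<Longrightarrow> monomial j (a j) \<in> commutant \<sigma>"
  by (rule monomial_in_commutant[OF continuous_on_commutant]) (auto intro: commutant_nonzero_Fix)

lemma truncate_in_commutant: "finite G \<Longrightarrow> a \<in> commutant \<sigma> \<Longrightarrow> truncate G a \<in> commutant \<sigma>"
  unfolding truncate_eq_sum by (intro commutant_sum monomial_coefficient_in_commutant)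

lemma character_truncate:
  "\<psi> \<in> characters \<sigma> \<Longrightarrow> finite G \<Longrightarrow> a \<in> commutant \<sigma> \<Longrightarrow> \<psi> (truncate G a) = (\<Sum>j\<in>G. \<psi> (monomial j (a j)))"
  unfolding truncate_eq_sum by (intro character_sum monomial_coefficient_in_commutant)

lemma l1_norm_diff_truncate:
  assumes "a \<in> commutant \<sigma>"
  shows "l1_norm (\<lambda>k x. a k x - truncate G a k x) = infsum (\<lambda>k. supn (a k)) (- G)"
  unfolding l1_norm_def truncate_def by (rule infsum_cong_neutral) auto

lemma character_diff_truncate:
  assumes "\<psi> \<in> characters \<sigma>" "finite G" "a \<in> commutant \<sigma>"
  shows "cmod (\<psi> a - \<psi> (truncate G a)) \<le> infsum (\<lambda>k. supn (a k)) (- G)"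
  using norm_character_le[OF assms(1) commutant_diff[OF assms(3) truncate_in_commutant[OF assms(2,3)]]]
    character_diff[OF assms(1,3) truncate_in_commutant[OF assms(2,3)]] l1_norm_diff_truncate[OF assms(3)]
  by simp

lemma norm_character_diff_le_truncate:
  assumes \<omega>: "\<omega> \<in> characters \<sigma>" and \<phi>: "\<phi> \<in> characters \<sigma>" and G: "finite G"
    and a: "a \<in> commutant \<sigma>"
  shows "cmod (\<omega> a - \<phi> a) \<le> 2 * infsum (\<lambda>k. supn (a k)) (- G)
           + (\<Sum>j\<in>G. cmod (\<omega> (monomial j (a j)) - \<phi> (monomial j (a j))))"
proof -
  have "\<omega> (truncate G a) - \<phi> (truncate G a) = (\<Sum>j\<in>G. \<omega> (monomial j (a j)) - \<phi> (monomial j (a j)))"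
    by (simp add: character_truncate[OF \<omega> G a] character_truncate[OF \<phi> G a] sum_subtractf)
  then have "cmod (\<omega> (truncate G a) - \<phi> (truncate G a))
      \<le> (\<Sum>j\<in>G. cmod (\<omega> (monomial j (a j)) - \<phi> (monomial j (a j))))"
    using norm_sum by metis
  moreover have "cmod (\<omega> a - \<phi> a) \<le> cmod (\<omega> a - \<omega> (truncate G a))
      + cmod (\<omega> (truncate G a) - \<phi> (truncate G a)) + cmod (\<phi> a - \<phi> (truncate G a))"
    using norm_triangle_ineq4[of "\<omega> a - \<omega> (truncate G a) + (\<omega> (truncate G a) - \<phi> (truncate G a))"
        "\<phi> a - \<phi> (truncate G a)"]
      norm_triangle_ineq[of "\<omega> a - \<omega> (truncate G a)" "\<omega> (truncate G a) - \<phi> (truncate G a)"]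
    by simp
  ultimately show ?thesis
    using character_diff_truncate[OF \<omega> G a] character_diff_truncate[OF \<phi> G a] by linarith
qed

lemma common_truncation_set:
  assumes "finite J" "J \<subseteq> commutant \<sigma>" "\<delta> > 0"
  obtains G where "finite G" "\<And>a. a \<in> J \<Longrightarrow> infsum (\<lambda>k. supn (a k)) (- G) < \<delta>"
proof -
  have "\<forall>a\<in>J. \<exists>F. finite F \<and> (\<forall>G. finite G \<and> F \<subseteq> G \<longrightarrow> \<bar>infsum (\<lambda>k. supn (a k)) (- G)\<bar> < \<delta>)"
    using infsum_tail_small[OF summable_on_supn_commutant assms(3)] assms(2) by (metis subsetD)
  then obtain F where F: "\<forall>a\<in>J. finite (F a) \<and>
      (\<forall>G. finite G \<and> F a \<subseteq> G \<longrightarrow> \<bar>infsum (\<lambda>k. supn (a k)) (- G)\<bar> < \<delta>)"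
    by (rule bchoice[elim_format]) blast
  have "finite (\<Union>a\<in>J. F a)" using assms(1) F by blast
  moreover have "infsum (\<lambda>k. supn (a k)) (- (\<Union>a\<in>J. F a)) < \<delta>" if "a \<in> J" for a
    using F that \<open>finite (\<Union>a\<in>J. F a)\<close> by (metis UN_upper abs_less_iff)
  ultimately show ?thesis using that by blast
qed

text \<open>Truncate all a \<in> J to a common finite set G of indices, then compare \<phi> and \<omega> on the finitely
  many monomials a_j \<delta>^j, j \<in> G.\<close>

lemma point_characters_approx:
  assumes phi: "\<phi> \<in> characters \<sigma>" and J: "finite J" "J \<subseteq> commutant \<sigma>" and eps: "\<epsilon> > 0"
  shows "\<exists>\<omega>\<in>point_characters. \<forall>a\<in>J. cmod (\<omega> a - \<phi> a) < \<epsilon>"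
proof -
  obtain x\<^sub>0 where x\<^sub>0: "\<And>f. continuous_on UNIV f \<Longrightarrow> \<phi> (emb f) = f x\<^sub>0"
    using character_emb_eval[OF phi] by blast
  define \<delta> where "\<delta> = \<epsilon> / 3"
  have \<delta>: "\<delta> > 0" using eps by (simp add: \<delta>_def)
  obtain G where G: "finite G" "\<And>a. a \<in> J \<Longrightarrow> infsum (\<lambda>k. supn (a k)) (- G) < \<delta>"
    using common_truncation_set[OF J \<delta>] by blast
  define \<eta> where "\<eta> = \<delta> / (card G + 1)"
  have \<eta>: "\<eta> > 0" "card G * \<eta> < \<delta>" using \<delta> by (simp_all add: \<eta>_def field_simps)
  define U where "U = (\<Inter>p\<in>J \<times> G. {y. cmod (fst p (snd p) y - fst p (snd p) x\<^sub>0) < \<eta>})"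
  have "open {y. cmod (a j y - a j x\<^sub>0) < \<eta>}" if "a \<in> J" for a j
  proof -
    have "continuous_on UNIV (a j)" using that J(2) continuous_on_commutant by blast
    then have "continuous_on UNIV (\<lambda>y. cmod (a j y - a j x\<^sub>0))" by (intro continuous_intros)
    from open_Collect_less[OF this continuous_on_const] show ?thesis by simp
  qed
  then have "open U" unfolding U_def using J(1) G(1) by (intro open_INT) auto
  moreover have "x\<^sub>0 \<in> U" unfolding U_def using \<eta> by auto
  ultimately obtain \<omega> y where \<omega>: "\<omega> \<in> point_characters" and y: "y \<in> U" and
    est: "\<And>k f. continuous_on UNIV f \<Longrightarrow> {x. f x \<noteq> 0} \<subseteq> Fix \<sigma> k \<Longrightarrow>
            cmod (\<omega> (monomial k f) - \<phi> (monomial k f)) \<le> cmod (f y - f x\<^sub>0)"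
    using point_character_near_on_monomials[where \<phi>=\<phi> and x\<^sub>0=x\<^sub>0, OF phi x\<^sub>0] by blast
  have "cmod (\<omega> a - \<phi> a) < \<epsilon>" if a: "a \<in> J" for a
  proof -
    have aA: "a \<in> commutant \<sigma>" using a J(2) by blast
    have "infsum (\<lambda>k. supn (a k)) (- G) < \<delta>" using G(2) a by blast
    moreover have "cmod (\<omega> (monomial j (a j)) - \<phi> (monomial j (a j))) \<le> \<eta>" if j: "j \<in> G" for j
    proof -
      have "{x. a j x \<noteq> 0} \<subseteq> Fix \<sigma> j" using commutant_nonzero_Fix[OF aA] by blast
      then have "cmod (\<omega> (monomial j (a j)) - \<phi> (monomial j (a j))) \<le> cmod (a j y - a j x\<^sub>0)"
        by (rule est[OF continuous_on_commutant[OF aA]])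
      also have "\<dots> < \<eta>" using y a j by (auto simp: U_def)
      finally show ?thesis by simp
    qed
    then have "(\<Sum>j\<in>G. cmod (\<omega> (monomial j (a j)) - \<phi> (monomial j (a j)))) \<le> card G * \<eta>"
      using sum_mono[of G _ "\<lambda>_. \<eta>"] by simp
    moreover have "\<omega> \<in> characters \<sigma>" using \<omega> point_characters_subset by blast
    note norm_character_diff_le_truncate[OF this phi G(1) aA]
    ultimately show ?thesis using \<eta>(2) by (simp add: \<delta>_def)
  qed
  then show ?thesis using \<omega> by blast
qed

end

context compact_homeo
begin

lemma closure_of_point_characters: "gelfand_topology \<sigma> closure_of point_characters = characters \<sigma>"
proof -
  have ext: "characters \<sigma> \<subseteq> extensional (commutant \<sigma>)" by (auto simp: characters_def)
  have "\<phi> \<in> product_topology (\<lambda>_. euclidean) (commutant \<sigma>) closure_of point_characters"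
    if "\<phi> \<in> characters \<sigma>" for \<phi>
    using that ext point_characters_subset point_characters_approx[OF that]
    by (intro in_product_topology_closure_of_approx) (auto simp: dist_norm)
  moreover have "gelfand_topology \<sigma> closure_of point_characters
      = characters \<sigma> \<inter> product_topology (\<lambda>_. euclidean) (commutant \<sigma>) closure_of point_characters"
    unfolding gelfand_topology_def closure_of_subtopology using point_characters_subset
    by (simp add: Int_absorb1)
  ultimately show ?thesis by blast
qed

text \<open>The coefficient d_k is nonzero on an open subset of Fix_k, which contains an aperiodic point or
  a point y in the interior of some Per_p. In the second case, if all \<omega>_(y,c) vanished at d, the
  Fourier series \<Sum>_j d_(jp)(y) c^j would vanish on the circle.\<close>

lemma point_character_nonzero:
  assumes d: "d \<in> commutant \<sigma>" and "d k x \<noteq> 0"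
  shows "\<exists>\<omega>\<in>point_characters. \<omega> d \<noteq> 0"
proof -
  define W where "W = {x. d k x \<noteq> 0}"
  have "W \<subseteq> Fix \<sigma> k" using commutant_nonzero_Fix[OF d] by (auto simp: W_def)
  then have W: "open W" "W \<noteq> {}" "W \<subseteq> Fix \<sigma> (int (nat \<bar>k\<bar>))"
    unfolding Fix_abs using open_nonzero_set[OF continuous_on_commutant[OF d]] assms by (auto simp: W_def)
  have "\<exists>y\<in>W. y \<in> Aper \<sigma> \<or> (\<exists>p. 1 \<le> p \<and> y \<in> interior (Per \<sigma> p))"
  proof (cases "k = 0")
    case False
    then have "1 \<le> nat \<bar>k\<bar>" by simp
    from open_Fix_meets_interior_Per[OF W this] show ?thesis by blast
  qed (use open_meets_Aper_or_interior_Per[OF W(1,2)] in blast)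
  then obtain y where dy: "d k y \<noteq> 0" and y: "y \<in> Aper \<sigma> \<or> (\<exists>p. 1 \<le> p \<and> y \<in> interior (Per \<sigma> p))"
    by (auto simp: W_def)
  have "y \<in> Fix \<sigma> k" by (rule commutant_nonzero_Fix[OF d dy])
  with y consider "y \<in> Aper \<sigma>" "k = 0" | p where "y \<in> interior (Per \<sigma> p)" "int p dvd k"
    using Aper_Fix_imp_0 Per_Fix_imp_dvd interior_subset by blast
  then show ?thesis
  proof cases
    case 1
    have "omega_x \<sigma> y d \<noteq> 0" using 1 d dy by (simp add: omega_x_def)
    then show ?thesis using omega_x_in_point_characters[OF 1(1)] by blast
  next
    case (2 p)
    then obtain j where k: "k = j * int p" by (auto simp: dvd_def mult.commute)
    show ?thesis
    proof (rule ccontr)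
      assume none: "\<not> ?thesis"
      have "(\<Sum>\<^sub>\<infinity>j. d (j * int p) y * c powi j) = 0" if c: "cmod c = 1" for c
      proof -
        have "omega_xc \<sigma> y c d = 0" using omega_xc_in_point_characters[OF 2(1) c] none by blast
        then show ?thesis using omega_xc_eq[OF 2(1) d] by simp
      qed
      then have "d (j * int p) y = 0"
        by (rule fourier_coefficient_eq_0[OF summable_on_norm_commutant_multiples[OF d interior_Per_pos[OF 2(1)]]])
      with dy k show False by simp
    qed
  qed
qed

lemma point_characters_separate:
  assumes "a \<in> commutant \<sigma>" "b \<in> commutant \<sigma>" "a \<noteq> b"
  shows "\<exists>\<omega>\<in>point_characters. \<omega> a \<noteq> \<omega> b"
proof -
  obtain k x where "a k x - b k x \<noteq> 0" using assms(3) by (metis eq_iff_diff_eq_0 ext)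
  then obtain \<omega> where \<omega>: "\<omega> \<in> point_characters" "\<omega> (\<lambda>k x. a k x - b k x) \<noteq> 0"
    using point_character_nonzero[OF commutant_diff[OF assms(1,2)]] by blast
  have "\<omega> \<in> characters \<sigma>" using \<omega>(1) point_characters_subset by blast
  then have "\<omega> a \<noteq> \<omega> b" using \<omega>(2) character_diff[OF _ assms(1,2)] by force
  then show ?thesis using \<omega>(1) by blast
qed

end

lemma compact_homeo_if_homeomorphism:
  fixes \<sigma> :: "'a::t2_space \<Rightarrow> 'a"
  assumes "compact (UNIV :: 'a set)" "homeomorphism UNIV UNIV \<sigma> \<tau>"
  shows "compact_homeo \<sigma>"
proof
  have inv: "\<And>x. \<tau> (\<sigma> x) = x" "\<And>y. \<sigma> (\<tau> y) = y" using assms(2) by (auto simp: homeomorphism_def)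
  then show "bij \<sigma>" by (metis bij_betw_byWitness subset_UNIV)
  then have "inv \<sigma> = \<tau>" using inv by (metis bij_inv_eq_iff ext)
  then show "continuous_on UNIV (inv \<sigma>)" using assms(2) by (simp add: homeomorphism_def)
qed (use assms in \<open>auto simp: homeomorphism_def\<close>)

theorem corollary3p11:
  fixes \<sigma> :: "'a::t2_space \<Rightarrow> 'a"
  assumes "compact (UNIV :: 'a set)"
    and "\<exists>\<tau>. homeomorphism UNIV UNIV \<sigma> \<tau>"
  defines "S \<equiv> omega_x \<sigma> ` Aper \<sigma> \<union>
      {omega_xc \<sigma> x c | x c. x \<in> (\<Union>q\<in>{1..}. interior (Per \<sigma> q)) \<and> cmod c = 1}"
  shows "S \<subseteq> characters \<sigma>
    \<and> (gelfand_topology \<sigma>) closure_of S = characters \<sigma>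
    \<and> (\<forall>a\<in>commutant \<sigma>. \<forall>b\<in>commutant \<sigma>. a \<noteq> b \<longrightarrow> (\<exists>\<omega>\<in>S. \<omega> a \<noteq> \<omega> b))"
proof -
  interpret compact_homeo \<sigma>
    using assms(1,2) compact_homeo_if_homeomorphism by blast
  have "S = point_characters" by (simp add: S_def point_characters_def)
  with point_characters_subset closure_of_point_characters point_characters_separate
  show ?thesis by simp
qed

end
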